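(* Solutions of the equations $\frac{u(\mathfrak{z}_2)-u(\mathfrak{z}_1)}{u(\mathfrak{z}_3)-u(\mathfrak{z}_2)}=\frac{v(\mathfrak{z}_3)-v(\mathfrak{z}_2)}{v(\mathfrak{z}_1)-v(\mathfrak{z}_3)}$ (on all positively oriented elementary triangles) satisfying the constraints \[ \alpha u=k\frac{f_0g_0f_3}{f_0g_0+g_0f_3+f_3g_3}+\ell\frac{f_2g_2f_5}{f_2g_2+g_2f_5+f_5g_5}+m\frac{f_4g_4f_1}{f_4g_4+g_4f_1+f_1g_1}, \] \[ \beta v=k\frac{g_0f_3g_3}{f_0g_0+g_0f_3+f_3g_3}+\ell\frac{g_2f_5g_5}{f_2g_2+g_2f_5+f_5g_5}+m\frac{g_4f_1g_1}{f_4g_4+g_4f_1+f_1g_1} \] are isomonodromic. The corresponding matrix $\mathcal{A}_{k,\ell,m}$ is given by the following formulas: \begin{equation} \mathcal{A}_{k,\ell,m}=\frac{C_{k,\ell,m}}{1+\mu}+\frac{D(\mathfrak{z})}{\mu}, \end{equation} where $C_{k,\ell,m}$ and $D(\mathfrak{z})$ are $\mu$--independent matrices: \begin{equation} C_{k,\ell,m}=kP_0(\mathfrak{z})+\ell P_2(\mathfrak{z})+mP_4(\mathfrak{z}), \end{equation} $P_{0,2,4}$ are rank 1 matrices \begin{equation} P_j(\mathfrak{z})=\frac{1}{f_jg_j+g_jf_{j+3}+f_{j+3}g_{j+3}} \begin{pmatrix} f_jg_j & -f_jg_jf_{j+3} & f_jg_jf_{j+3}g_{j+3} \\ -g_j &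 g_jf_{j+3} & -g_jf_{j+3}g_{j+3} \\ 1 & -f_{j+3} & f_{j+3}g_{j+3} \end{pmatrix},\quad j=0,2,4, \end{equation} and the matrix $D$ is well defined on $V(\mathcal{T}\mathcal{L})$ and not only on its covering $\mathbb Z^3$: \begin{equation} D(\mathfrak{z})=\begin{pmatrix} -(2\alpha+\beta)/3 & \alpha u & \beta a-\alpha a' \\ 0 & (\alpha-\beta)/3 & \beta v \\ 0 & 0 & (2\beta+\alpha)/3 \end{pmatrix}, \end{equation} where the functions $a,a':V(\mathcal{T}\mathcal{L})\mapsto\mathbb C$ are solutions of the equations $a(\mathfrak{z}_2)-a(\mathfrak{z}_1)=v(\mathfrak{z}_1)\big(u(\mathfrak{z}_2)-u(\mathfrak{z}_1)\big)$ and $a'(\mathfrak{z}_2)-a'(\mathfrak{z}_1)=u(\mathfrak{z}_2)\big(v(\mathfrak{z}_2)-v(\mathfrak{z}_1)\big)$ for positively oriented edges $(\mathfrak{z}_1,\mathfrak{z}_2)$.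
   Context: The regular triangular lattice $\mathcal{T}\mathcal{L}$ has vertices $\mathfrak{z}=k+\ell\omega+m\omega^2$, $\omega=e^{2\pi i/3}$, $(k,\ell,m)\in\mathbb Z^3$ modulo $(n,n,n)$; positively oriented edges are $(\mathfrak{z},\mathfrak{z}+1)$, $(\mathfrak{z},\mathfrak{z}+\omega)$, $(\mathfrak{z},\mathfrak{z}+\omega^2)$, and a positively oriented elementary triangle has consecutive vertices $\mathfrak{z}_1,\mathfrak{z}_2,\mathfrak{z}_3$ with $\mathfrak{z}_2-\mathfrak{z}_1,\mathfrak{z}_3-\mathfrak{z}_2,\mathfrak{z}_1-\mathfrak{z}_3\in\{1,\omega,\omega^2\}$. $u,v$ are functions on vertices vanishing at $0$; on each positively oriented edge $(\mathfrak{z}_1,\mathfrak{z}_2)$, $f=u(\mathfrak{z}_2)-u(\mathfrak{z}_1)$, $g=v(\mathfrak{z}_2)-v(\mathfrak{z}_1)$, $h=1/(fg)$. At vertex $\mathfrak{z}$ with representative $(k,\ell,m)$, the edges $\mathfrak{e}_0=(\mathfrak{z},\mathfrak{z}+1)$, $\mathfrak{e}_2=(\mathfrak{z},\mathfrak{z}+\omega)$, $\mathfrak{e}_4=(\mathfrak{z},\mathfrak{z}+\omega^2)$, $\mathfrak{e}_1=(\mathfrak{z}-\omega^2,\mathfrak{z})$, $\mathfrak{e}_3=(\mathfrak{z}-1,\mathfrak{z})$, $\mathfrak{e}_5=(\mathfrak{z}-\omega,\mathfrak{z})$ carry $f_j,g_j$, and $u=u(\mathfrak{z})$, $v=v(\mathfrak{z})$;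 $\alpha,\beta\in\mathbb C$. Let $\mathcal{L}(\mathfrak{e},\mu)=\begin{pmatrix} 1 & f & 0 \\ 0 & 1 & g \\ \mu h & 0 & 1\end{pmatrix}$. A solution is called isomonodromic if there is a wave function $\Psi:\mathbb Z^3\to GL(3,\mathbb C)[\mu]$ with $\Psi_{k+n,\ell+n,m+n}=(1+\mu)^n\Psi_{k,\ell,m}$, $\Psi_{k+1,\ell,m}=\mathcal{L}(\mathfrak{e}_0,\mu)\Psi_{k,\ell,m}$, $\Psi_{k,\ell+1,m}=\mathcal{L}(\mathfrak{e}_2,\mu)\Psi_{k,\ell,m}$, $\Psi_{k,\ell,m+1}=\mathcal{L}(\mathfrak{e}_4,\mu)\Psi_{k,\ell,m}$, satisfying also $\frac{d}{d\mu}\Psi_{k,\ell,m}=\mathcal{A}_{k,\ell,m}(\mu)\Psi_{k,\ell,m}$ with $\mathcal{A}_{k,\ell,m}$ meromorphic in $\mu$ with poles whose positions and orders are independent of $k,\ell,m$. *)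

theory Defs
  imports "HOL-Analysis.Analysis"
begin

text \<open>Vertices of the triangular lattice are represented by integer triples (k,l,m)
  (the vertex being k + l*omega + m*omega^2); since 1 + omega + omega^2 = 0, a function on
  vertices is a function on triples invariant under the shift (1,1,1).\<close>

type_synonym vfun = "int \<Rightarrow> int \<Rightarrow> int \<Rightarrow> complex"

definition vertex_fun :: "vfun \<Rightarrow> bool" where
  "vertex_fun w \<longleftrightarrow> (\<forall>k l m. w (k+1) (l+1) (m+1) = w k l m)"

text \<open>Edge differences at the vertex with representative (k,l,m):
  e0 = (z,z+1), e2 = (z,z+omega), e4 = (z,z+omega^2),
  e1 = (z-omega^2,z), e3 = (z-1,z), e5 = (z-omega,z).\<close>

definition d0 :: "vfun \<Rightarrow> int \<Rightarrow> int \<Rightarrow> int \<Rightarrow> complex" where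
  "d0 w k l m = w (k+1) l m - w k l m"
definition d2 :: "vfun \<Rightarrow> int \<Rightarrow> int \<Rightarrow> int \<Rightarrow> complex" where
  "d2 w k l m = w k (l+1) m - w k l m"
definition d4 :: "vfun \<Rightarrow> int \<Rightarrow> int \<Rightarrow> int \<Rightarrow> complex" where
  "d4 w k l m = w k l (m+1) - w k l m"
definition d1 :: "vfun \<Rightarrow> int \<Rightarrow> int \<Rightarrow> int \<Rightarrow> complex" where
  "d1 w k l m = w k l m - w k l (m-1)"
definition d3 :: "vfun \<Rightarrow> int \<Rightarrow> int \<Rightarrow> int \<Rightarrow> complex" where
  "d3 w k l m = w k l m - w (k-1) l m"
definition d5 :: "vfun \<Rightarrow> int \<Rightarrow> int \<Rightarrow> int \<Rightarrow> complex" where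
  "d5 w k l m = w k l m - w k (l-1) m"

definition tri_eq :: "vfun \<Rightarrow> vfun \<Rightarrow> int \<times> int \<times> int \<Rightarrow> int \<times> int \<times> int \<Rightarrow> int \<times> int \<times> int \<Rightarrow> bool" where
  "tri_eq u v p1 p2 p3 \<longleftrightarrow>
     (let U = (\<lambda>(k,l,m). u k l m); V = (\<lambda>(k,l,m). v k l m) in
      (U p2 - U p1) / (U p3 - U p2) = (V p3 - V p2) / (V p1 - V p3))"

text \<open>The positively oriented elementary triangles are exactly
  (z, z+1, z+1+omega) and (z, z+1, z+1+omega^2) for vertices z.\<close>
definition triangle_eqs :: "vfun \<Rightarrow> vfun \<Rightarrow> bool" where
  "triangle_eqs u v \<longleftrightarrow> (\<forall>k l m.
     tri_eq u v (k,l,m) (k+1,l,m) (k+1,l+1,m) \<and>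
     tri_eq u v (k,l,m) (k+1,l,m) (k+1,l,m+1))"

definition mat3 :: "complex \<Rightarrow> complex \<Rightarrow> complex \<Rightarrow> complex \<Rightarrow> complex \<Rightarrow> complex \<Rightarrow>
    complex \<Rightarrow> complex \<Rightarrow> complex \<Rightarrow> complex^3^3" where
  "mat3 a11 a12 a13 a21 a22 a23 a31 a32 a33 =
     (\<chi> i j. if i = 1 then (if j = 1 then a11 else if j = 2 then a12 else a13)
             else if i = 2 then (if j = 1 then a21 else if j = 2 then a22 else a23)
             else (if j = 1 then a31 else if j = 2 then a32 else a33))"

definition smat :: "complex \<Rightarrow> complex^3^3 \<Rightarrow> complex^3^3" where
  "smat c M = (\<chi> i j. c * M $ i $ j)"

text \<open>Lax matrix L(e,mu) for an edge with f, g (and h = 1/(f g)).\<close>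
definition Lmat :: "complex \<Rightarrow> complex \<Rightarrow> complex \<Rightarrow> complex^3^3" where
  "Lmat f g \<mu> = mat3 1 f 0  0 1 g  (\<mu> * (1 / (f * g))) 0 1"

text \<open>P_j with f = f_j, g = g_j, f' = f_{j+3}, g' = g_{j+3}.\<close>
definition Pmat :: "complex \<Rightarrow> complex \<Rightarrow> complex \<Rightarrow> complex \<Rightarrow> complex^3^3" where
  "Pmat f g f' g' = smat (1 / (f*g + g*f' + f'*g'))
     (mat3 (f*g) (- f*g*f') (f*g*f'*g')
           (- g) (g*f') (- g*f'*g')
           1 (- f') (f'*g'))"

definition Cmat :: "vfun \<Rightarrow> vfun \<Rightarrow> int \<Rightarrow> int \<Rightarrow> int \<Rightarrow> complex^3^3" where
  "Cmat u v k l m =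
     smat (of_int k) (Pmat (d0 u k l m) (d0 v k l m) (d3 u k l m) (d3 v k l m)) +
     smat (of_int l) (Pmat (d2 u k l m) (d2 v k l m) (d5 u k l m) (d5 v k l m)) +
     smat (of_int m) (Pmat (d4 u k l m) (d4 v k l m) (d1 u k l m) (d1 v k l m))"

definition Dmat :: "complex \<Rightarrow> complex \<Rightarrow> vfun \<Rightarrow> vfun \<Rightarrow> vfun \<Rightarrow> vfun \<Rightarrow>
    int \<Rightarrow> int \<Rightarrow> int \<Rightarrow> complex^3^3" where
  "Dmat \<alpha> \<beta> u v a a' k l m =
     mat3 (- (2*\<alpha> + \<beta>) / 3) (\<alpha> * u k l m) (\<beta> * a k l m - \<alpha> * a' k l m)
          0 ((\<alpha> - \<beta>) / 3) (\<beta> * v k l m)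
          0 0 ((2*\<beta> + \<alpha>) / 3)"

definition Amat :: "complex \<Rightarrow> complex \<Rightarrow> vfun \<Rightarrow> vfun \<Rightarrow> vfun \<Rightarrow> vfun \<Rightarrow>
    int \<Rightarrow> int \<Rightarrow> int \<Rightarrow> complex \<Rightarrow> complex^3^3" where
  "Amat \<alpha> \<beta> u v a a' k l m \<mu> =
     smat (1 / (1 + \<mu>)) (Cmat u v k l m) + smat (1 / \<mu>) (Dmat \<alpha> \<beta> u v a a' k l m)"

end

theory Submission
  imports Defs
begin

(* The Lax matrices L(e, \<mu>) of the cross-ratio system have zero curvature: their product around
   an elementary triangle is (1 + \<mu>) I, and the two paths around a rhombus give the same product.
   Hence a wave function \<Psi> can be transported from the origin over all of \<int>\<^sup>3, with
   \<Psi>(z + (1,1,1)) = (1 + \<mu>) \<Psi>(z). If moreover A(z\<^sub>2) L - L A(z\<^sub>1) = dL/d\<mu> on every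
   edge, the defect \<Psi>' - A \<Psi> is transported by the invertible L as well, so \<Psi>' = A \<Psi> holds
   everywhere as soon as it holds at the origin; there C = 0, D is diagonal and
   \<Psi> = diag(\<mu>^d\<^sub>1, \<mu>^d\<^sub>2, \<mu>^d\<^sub>3) works.

   For A = C/(1 + \<mu>) + D/\<mu> the edge condition splits into three: C intertwines L(-1), D
   intertwines L(0), and the coefficient C + D of A at infinity is lower triangular with a unit
   jump on the diagonal. The first holds because each P\<^sub>j is the product of a kernel vector and
   a cokernel vector of L(-1) on adjacent edges, and the rhombus relations intertwine these. The
   others follow from the constraints on \<alpha> u and \<beta> v and the defining relations of the
   potentials a, a', which exist because the form v du is closed around every triangle. *)

section \<open>\<open>3 \<times> 3\<close> matrices\<close>

lemma mat3_nth [simp]: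
  "mat3 a11 a12 a13 a21 a22 a23 a31 a32 a33 $ 1 $ 1 = a11"
  "mat3 a11 a12 a13 a21 a22 a23 a31 a32 a33 $ 1 $ 2 = a12"
  "mat3 a11 a12 a13 a21 a22 a23 a31 a32 a33 $ 1 $ 3 = a13"
  "mat3 a11 a12 a13 a21 a22 a23 a31 a32 a33 $ 2 $ 1 = a21"
  "mat3 a11 a12 a13 a21 a22 a23 a31 a32 a33 $ 2 $ 2 = a22"
  "mat3 a11 a12 a13 a21 a22 a23 a31 a32 a33 $ 2 $ 3 = a23"
  "mat3 a11 a12 a13 a21 a22 a23 a31 a32 a33 $ 3 $ 1 = a31"
  "mat3 a11 a12 a13 a21 a22 a23 a31 a32 a33 $ 3 $ 2 = a32"
  "mat3 a11 a12 a13 a21 a22 a23 a31 a32 a33 $ 3 $ 3 = a33"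
  by (simp_all add: mat3_def)

lemma matrix3_eq_iff: "(M :: 'a^3^3) = N \<longleftrightarrow>
  M$1$1 = N$1$1 \<and> M$1$2 = N$1$2 \<and> M$1$3 = N$1$3 \<and>
  M$2$1 = N$2$1 \<and> M$2$2 = N$2$2 \<and> M$2$3 = N$2$3 \<and>
  M$3$1 = N$3$1 \<and> M$3$2 = N$3$2 \<and> M$3$3 = N$3$3"
  by (auto simp: vec_eq_iff forall_3)

lemma matrix_mult_nth_3:
  "((M :: 'a::semiring_1^3^3) ** N) $ i $ j = M$i$1 * N$1$j + M$i$2 * N$2$j + M$i$3 * N$3$j"
  by (simp add: matrix_matrix_mult_def sum_3)

lemma mat3_mult:
  "mat3 a11 a12 a13 a21 a22 a23 a31 a32 a33 ** mat3 b11 b12 b13 b21 b22 b23 b31 b32 b33 =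
   mat3 (a11*b11+a12*b21+a13*b31) (a11*b12+a12*b22+a13*b32) (a11*b13+a12*b23+a13*b33)
        (a21*b11+a22*b21+a23*b31) (a21*b12+a22*b22+a23*b32) (a21*b13+a22*b23+a23*b33)
        (a31*b11+a32*b21+a33*b31) (a31*b12+a32*b22+a33*b32) (a31*b13+a32*b23+a33*b33)"
  by (simp add: matrix3_eq_iff matrix_mult_nth_3)

lemma mat3_add:
  "mat3 a11 a12 a13 a21 a22 a23 a31 a32 a33 + mat3 b11 b12 b13 b21 b22 b23 b31 b32 b33 =
   mat3 (a11+b11) (a12+b12) (a13+b13) (a21+b21) (a22+b22) (a23+b23) (a31+b31) (a32+b32) (a33+b33)"
  by (simp add: matrix3_eq_iff)

lemma mat_eq_mat3: "(mat c :: complex^3^3) = mat3 c 0 0 0 c 0 0 0 c"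
  by (simp add: matrix3_eq_iff mat_def)

lemma det_mat3: "det (mat3 a11 a12 a13 a21 a22 a23 a31 a32 a33) =
  a11*a22*a33 + a12*a23*a31 + a13*a21*a32 - a11*a23*a32 - a12*a21*a33 - a13*a22*a31"
  by (simp add: det_3)

lemma matrix_add_rdistrib: "((A :: 'a::semiring_1^'n^'m) + B) ** C = A ** C + B ** C"
  by (simp add: vec_eq_iff matrix_matrix_mult_def algebra_simps sum.distrib)

lemma matrix_left_cancel:
  assumes "Li ** L = mat 1"
  shows "L ** X = L ** Y \<longleftrightarrow> X = (Y :: 'a::semiring_1^'n^'n)"
  by (metis assms matrix_mul_assoc matrix_mul_lid)

lemma smat_nth [simp]: "smat c M $ i $ j = c * M $ i $ j"
  by (simp add: smat_def)

lemma smat_mat3: "smat c (mat3 a11 a12 a13 a21 a22 a23 a31 a32 a33) =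
   mat3 (c*a11) (c*a12) (c*a13) (c*a21) (c*a22) (c*a23) (c*a31) (c*a32) (c*a33)"
  by (simp add: matrix3_eq_iff)

lemma smat_eq_mat_mult: "smat c M = mat c ** M"
  by (simp add: vec_eq_iff matrix_mult_nth_3 mat_def forall_3)

lemma smat_mult_left: "smat c A ** B = smat c (A ** B)"
  by (simp add: vec_eq_iff matrix_mult_nth_3 algebra_simps)

lemma smat_mult_right: "A ** smat c B = smat c (A ** B)"
  by (simp add: vec_eq_iff matrix_mult_nth_3 algebra_simps)

lemma smat_diff: "smat c (A - B) = smat c A - smat c B"
  by (simp add: vec_eq_iff algebra_simps)

lemma smat_smat: "smat c (smat d A) = smat (c * d) A"
  by (simp add: vec_eq_iff)

lemma smat_1 [simp]: "smat 1 A = A"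
  by (simp add: vec_eq_iff)

lemma smat_0 [simp]: "smat 0 A = 0"
  by (simp add: vec_eq_iff)

lemma smat_zero [simp]: "smat c 0 = 0"
  by (simp add: vec_eq_iff)

lemma det_smat: "det (smat c M) = c ^ 3 * det M"
  by (simp add: smat_eq_mat_mult det_mul mat_eq_mat3 det_mat3 power3_eq_cube)

section \<open>The Lax matrix\<close>

lemma det_Lmat: "f \<noteq> 0 \<Longrightarrow> g \<noteq> 0 \<Longrightarrow> det (Lmat f g \<mu>) = 1 + \<mu>"
  by (simp add: Lmat_def det_mat3)

definition Ladj :: "complex \<Rightarrow> complex \<Rightarrow> complex \<Rightarrow> complex^3^3" where
  "Ladj f g \<mu> = mat3 1 (-f) (f*g) (\<mu>/f) 1 (-g) (-\<mu>/(f*g)) (\<mu>/g) 1"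

lemma Ladj_Lmat:
  assumes "f \<noteq> 0" "g \<noteq> 0"
  shows "Ladj f g \<mu> ** Lmat f g \<mu> = mat (1 + \<mu>)" "Lmat f g \<mu> ** Ladj f g \<mu> = mat (1 + \<mu>)"
  using assms by (simp_all add: Ladj_def Lmat_def mat3_mult mat_eq_mat3 field_simps)

definition Linv :: "complex \<Rightarrow> complex \<Rightarrow> complex \<Rightarrow> complex^3^3" where
  "Linv f g \<mu> = smat (1 / (1 + \<mu>)) (Ladj f g \<mu>)"

lemma Linv_Lmat:
  assumes "f \<noteq> 0" "g \<noteq> 0" "\<mu> \<noteq> -1"
  shows "Linv f g \<mu> ** Lmat f g \<mu> = mat 1" "Lmat f g \<mu> ** Linv f g \<mu> = mat 1"
proof -
  have "1 + \<mu> \<noteq> 0"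
    using assms(3) by (simp add: add_eq_0_iff)
  then have "smat (1 / (1 + \<mu>)) (mat (1 + \<mu>)) = mat 1"
    by (simp add: mat_eq_mat3 smat_mat3)
  then show "Linv f g \<mu> ** Lmat f g \<mu> = mat 1" "Lmat f g \<mu> ** Linv f g \<mu> = mat 1"
    using Ladj_Lmat[OF assms(1,2)] by (simp_all add: Linv_def smat_mult_left smat_mult_right)
qed

definition Lmat_deriv :: "complex \<Rightarrow> complex \<Rightarrow> complex^3^3" where
  "Lmat_deriv f g = mat3 0 0 0 0 0 0 (1 / (f*g)) 0 0"

lemma Lmat_expand: "Lmat f g \<mu> = Lmat f g \<nu> + smat (\<mu> - \<nu>) (Lmat_deriv f g)"
  by (simp add: Lmat_def Lmat_deriv_def smat_mat3 mat3_add matrix3_eq_iff diff_divide_distrib)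

definition triangle_rel :: "complex \<Rightarrow> complex \<Rightarrow> complex \<Rightarrow> complex \<Rightarrow> complex \<Rightarrow> complex \<Rightarrow> bool" where
  "triangle_rel u1 v1 u2 v2 u3 v3 \<longleftrightarrow>
     (u2 - u1) * (v2 - v1) + (u2 - u1) * (v3 - v2) + (u3 - u2) * (v3 - v2) = 0"

lemma triangle_rel_rotate: "triangle_rel u1 v1 u2 v2 u3 v3 \<longleftrightarrow> triangle_rel u2 v2 u3 v3 u1 v1"
  unfolding triangle_rel_def by algebra

lemma triangle_rel_of_cross_ratio:
  assumes "(u2 - u1) / (u3 - u2) = (v3 - v2) / (v1 - v3)" "u3 \<noteq> u2" "v1 \<noteq> v3"
  shows "triangle_rel u1 v1 u2 v2 u3 v3"
proof -
  have "(u2 - u1) * (v1 - v3) = (v3 - v2) * (u3 - u2)"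
    using assms by (simp add: frac_eq_eq)
  then show ?thesis
    unfolding triangle_rel_def by algebra
qed

lemma triangle_rel_closed_form:
  "triangle_rel u1 v1 u2 v2 u3 v3 \<Longrightarrow> v1 * (u2 - u1) + v2 * (u3 - u2) + v3 * (u1 - u3) = 0"
  unfolding triangle_rel_def by algebra

lemma Lmat_triangle_monodromy:
  assumes rel: "triangle_rel u1 v1 u2 v2 u3 v3"
    and "u2 \<noteq> u1" "u3 \<noteq> u2" "u1 \<noteq> u3" "v2 \<noteq> v1" "v3 \<noteq> v2" "v1 \<noteq> v3"
  shows "Lmat (u1 - u3) (v1 - v3) \<mu> ** Lmat (u3 - u2) (v3 - v2) \<mu> ** Lmat (u2 - u1) (v2 - v1) \<mu>
     = mat (1 + \<mu>)"
proof -
  define h1 h2 h3 where "h1 = 1 / ((u2 - u1) * (v2 - v1))" and "h2 = 1 / ((u3 - u2) * (v3 - v2))"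
    and "h3 = 1 / ((u1 - u3) * (v1 - v3))"
  have h: "(u2 - u1) * (v2 - v1) * h1 = 1" "(u3 - u2) * (v3 - v2) * h2 = 1"
    "(u1 - u3) * (v1 - v3) * h3 = 1"
    using assms(2-) by (simp_all add: h1_def h2_def h3_def)
  show ?thesis
    unfolding Lmat_def h1_def[symmetric] h2_def[symmetric] h3_def[symmetric] mult_1 mult_1_right
      mat3_mult mat_eq_mat3 matrix3_eq_iff mat3_nth
    using rel h unfolding triangle_rel_def
    by (intro conjI) algebra+
qed

lemma Lmat_two_step:
  assumes rel: "f1 * g1 + f1 * g2 + f2 * g2 = 0"
    and nz: "f1 \<noteq> 0" "f2 \<noteq> 0" "g1 \<noteq> 0" "g2 \<noteq> 0" "f1 + f2 \<noteq> 0" "g1 + g2 \<noteq> 0"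
  shows "Lmat f2 g2 \<mu> ** Lmat f1 g1 \<mu> =
    mat3 1 (f1 + f2) ((f1 + f2) * (g1 + g2))
         (-\<mu> / (f1 + f2)) 1 (g1 + g2)
         (-\<mu> / ((f1 + f2) * (g1 + g2))) (-\<mu> / (g1 + g2)) 1"
proof -
  have "f2 * g1 = (f1 + f2) * (g1 + g2)" "g2 * (f1 + f2) = - (f1 * g1)" "f1 * (g1 + g2) = - (f2 * g2)"
    "(f1 * g1 + f2 * g2) * ((f1 + f2) * (g1 + g2)) = - (f1 * g1 * (f2 * g2))"
    using rel by algebra+
  with nz show ?thesis
    by (simp add: Lmat_def mat3_mult matrix3_eq_iff field_simps)
      (metis mult.left_commute mult_minus_right ring_class.ring_distribs(1))
qed

lemma Lmat_rhombus:
  assumes rel: "triangle_rel u1 v1 u2 v2 u3 v3" "triangle_rel u1 v1 u4 v4 u3 v3"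
    and "u2 \<noteq> u1" "u3 \<noteq> u2" "u4 \<noteq> u1" "u3 \<noteq> u4" "u3 \<noteq> u1"
        "v2 \<noteq> v1" "v3 \<noteq> v2" "v4 \<noteq> v1" "v3 \<noteq> v4" "v3 \<noteq> v1"
  shows "Lmat (u3 - u2) (v3 - v2) \<mu> ** Lmat (u2 - u1) (v2 - v1) \<mu> =
         Lmat (u3 - u4) (v3 - v4) \<mu> ** Lmat (u4 - u1) (v4 - v1) \<mu>"
  using Lmat_two_step[of "u2 - u1" "v2 - v1" "v3 - v2" "u3 - u2" \<mu>]
    Lmat_two_step[of "u4 - u1" "v4 - v1" "v3 - v4" "u3 - u4" \<mu>] assms
  by (simp add: triangle_rel_def)

section \<open>Residues and compatibility\<close>

definition Pcol :: "complex \<Rightarrow> complex \<Rightarrow> complex^3" where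
  "Pcol f g = vector [f * g, - g, 1]"

definition Prow :: "complex \<Rightarrow> complex \<Rightarrow> complex^3" where
  "Prow f g = vector [1, - f, f * g]"

lemma Pcol_nth [simp]: "Pcol f g $ 1 = f * g" "Pcol f g $ 2 = - g" "Pcol f g $ 3 = 1"
  by (simp_all add: Pcol_def)

lemma Prow_nth [simp]: "Prow f g $ 1 = 1" "Prow f g $ 2 = - f" "Prow f g $ 3 = f * g"
  by (simp_all add: Prow_def)

lemma Pmat_nth: "Pmat f g f' g' $ i $ j = Pcol f g $ i * Prow f' g' $ j / (f*g + g*f' + f'*g')"
  using exhaust_3[of i] exhaust_3[of j] by (auto simp: Pmat_def)

lemma trace_Pmat:
  assumes "f*g + g*f' + f'*g' \<noteq> 0"
  shows "Pmat f g f' g' $ 1 $ 1 + Pmat f g f' g' $ 2 $ 2 + Pmat f g f' g' $ 3 $ 3 = 1"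
  using assms by (simp add: Pmat_nth add_divide_distrib[symmetric] ring_distribs)

lemma Lmat_minus1_kernel:
  assumes "Lmat f g (-1) *v w = 0"
  shows "w = w $ 3 *s Pcol f g"
proof -
  have "w$1 + f * w$2 = 0" "w$2 + g * w$3 = 0"
    using arg_cong[OF assms, of "\<lambda>x. x$1"] arg_cong[OF assms, of "\<lambda>x. x$2"]
    by (simp_all add: matrix_vector_mult_def sum_3 Lmat_def)
  then show ?thesis
    by (simp add: vec_eq_iff forall_3 algebra_simps) algebra
qed

lemma Lmat_minus1_cokernel:
  assumes "z v* Lmat f g (-1) = 0"
  shows "z = z $ 1 *s Prow f g"
proof -
  have "z$1 * f + z$2 = 0" "z$2 * g + z$3 = 0"
    using arg_cong[OF assms, of "\<lambda>x. x$2"] arg_cong[OF assms, of "\<lambda>x. x$3"]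
    by (simp_all add: vector_matrix_mult_def sum_3 Lmat_def)
  then show ?thesis
    by (simp add: vec_eq_iff forall_3 algebra_simps) algebra
qed

lemma Lmat_minus1_Pcol: "f \<noteq> 0 \<Longrightarrow> g \<noteq> 0 \<Longrightarrow> Lmat f g (-1) *v Pcol f g = 0"
  by (simp add: vec_eq_iff forall_3 matrix_vector_mult_def sum_3 Lmat_def)

lemma Prow_Lmat_minus1: "f \<noteq> 0 \<Longrightarrow> g \<noteq> 0 \<Longrightarrow> Prow f g v* Lmat f g (-1) = 0"
  by (simp add: vec_eq_iff forall_3 vector_matrix_mult_def sum_3 Lmat_def)

lemma Pmat_mult_nth:
  "(Pmat f g f' g' ** M) $ i $ j = Pcol f g $ i * (Prow f' g' v* M) $ j / (f*g + g*f' + f'*g')"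
  by (simp add: matrix_mult_nth_3 Pmat_nth vector_matrix_mult_def sum_3 algebra_simps
      add_divide_distrib[symmetric])

lemma mult_Pmat_nth:
  "((M :: complex^3^3) ** Pmat f g f' g') $ i $ j
     = (M *v Pcol f g) $ i * Prow f' g' $ j / (f*g + g*f' + f'*g')"
  by (simp add: matrix_mult_nth_3 Pmat_nth matrix_vector_mult_def sum_3 algebra_simps
      add_divide_distrib[symmetric])

lemma Pmat_mult_Lmat_minus1: "f' \<noteq> 0 \<Longrightarrow> g' \<noteq> 0 \<Longrightarrow> Pmat f g f' g' ** Lmat f' g' (-1) = 0"
  by (simp add: vec_eq_iff Pmat_mult_nth Prow_Lmat_minus1)

lemma Lmat_minus1_mult_Pmat: "f \<noteq> 0 \<Longrightarrow> g \<noteq> 0 \<Longrightarrow> Lmat f g (-1) ** Pmat f g f' g' = 0"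
  by (simp add: vec_eq_iff mult_Pmat_nth Lmat_minus1_Pcol)

lemma Pcol_intertwine:
  assumes "Lmat f2 g2 (-1) ** L = W ** Lmat f1 g1 (-1)" "f1 \<noteq> 0" "g1 \<noteq> 0"
  shows "(L *v Pcol f1 g1) $ i = (L *v Pcol f1 g1) $ 3 * Pcol f2 g2 $ i"
proof -
  have "Lmat f2 g2 (-1) *v (L *v Pcol f1 g1) = W *v (Lmat f1 g1 (-1) *v Pcol f1 g1)"
    by (simp add: matrix_vector_mul_assoc assms(1))
  then have "Lmat f2 g2 (-1) *v (L *v Pcol f1 g1) = 0"
    by (simp add: Lmat_minus1_Pcol assms(2,3))
  then show ?thesis
    by (metis Lmat_minus1_kernel vector_smult_component)
qed

lemma Prow_intertwine:
  assumes "L ** Lmat f1 g1 (-1) = Lmat f2 g2 (-1) ** W" "f2 \<noteq> 0" "g2 \<noteq> 0"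
  shows "(Prow f2 g2 v* L) $ j = (Prow f2 g2 v* L) $ 1 * Prow f1 g1 $ j"
proof -
  have "(Prow f2 g2 v* L) v* Lmat f1 g1 (-1) = (Prow f2 g2 v* Lmat f2 g2 (-1)) v* W"
    by (simp add: vector_matrix_mul_assoc assms(1))
  then have "(Prow f2 g2 v* L) v* Lmat f1 g1 (-1) = 0"
    by (simp add: Prow_Lmat_minus1 assms(2,3))
  then show ?thesis
    by (metis Lmat_minus1_cokernel vector_smult_component)
qed

text \<open>A matrix intertwining the residues at \<open>\<mu> = -1\<close> of two pairs of edges maps kernel to
  kernel and cokernel to cokernel; the rank-one matrices built from them are then intertwined.\<close>
lemma Pmat_intertwine:
  assumes ker: "Lmat f2 g2 (-1) ** L = W1 ** Lmat f1 g1 (-1)"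
    and coker: "L ** Lmat f1' g1' (-1) = Lmat f2' g2' (-1) ** W2"
    and nz: "f1 \<noteq> 0" "g1 \<noteq> 0" "f2' \<noteq> 0" "g2' \<noteq> 0"
    and den: "f1*g1 + g1*f1' + f1'*g1' \<noteq> 0" "f2*g2 + g2*f2' + f2'*g2' \<noteq> 0"
  shows "Pmat f2 g2 f2' g2' ** L = L ** Pmat f1 g1 f1' g1'"
proof -
  define w where "w = L *v Pcol f1 g1"
  define z where "z = Prow f2' g2' v* L"
  have w: "w $ i = w $ 3 * Pcol f2 g2 $ i" for i
    unfolding w_def by (rule Pcol_intertwine[OF ker nz(1,2)])
  have z: "z $ j = z $ 1 * Prow f1' g1' $ j" for j
    unfolding z_def by (rule Prow_intertwine[OF coker nz(3,4)])
  have "z$1 * Pcol f1 g1 $ 1 + z$2 * Pcol f1 g1 $ 2 + z$3 * Pcol f1 g1 $ 3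
      = Prow f2' g2' $ 1 * w$1 + Prow f2' g2' $ 2 * w$2 + Prow f2' g2' $ 3 * w$3"
    unfolding z_def w_def
    by (simp add: vector_matrix_mult_def matrix_vector_mult_def sum_3 algebra_simps)
  then have "z$1 * (f1*g1 + g1*f1' + f1'*g1') = w$3 * (f2*g2 + g2*f2' + f2'*g2')"
    using w[of 1] w[of 2] z[of 2] z[of 3] by (simp add: algebra_simps)
  then have ratio: "z$1 / (f2*g2 + g2*f2' + f2'*g2') = w$3 / (f1*g1 + g1*f1' + f1'*g1')"
    using den by (simp add: frac_eq_eq)
  have "Pcol f2 g2 $ i * z $ j / (f2*g2 + g2*f2' + f2'*g2')
      = w $ i * Prow f1' g1' $ j / (f1*g1 + g1*f1' + f1'*g1')" for i j
  proof -
    have "Pcol f2 g2 $ i * z $ j / (f2*g2 + g2*f2' + f2'*g2')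
        = z$1 / (f2*g2 + g2*f2' + f2'*g2') * (Pcol f2 g2 $ i * Prow f1' g1' $ j)"
      by (subst z) simp
    also have "\<dots> = w $ i * Prow f1' g1' $ j / (f1*g1 + g1*f1' + f1'*g1')"
      by (subst w) (simp add: ratio)
    finally show ?thesis .
  qed
  then show ?thesis
    by (simp add: vec_eq_iff Pmat_mult_nth mult_Pmat_nth z_def w_def)
qed

text \<open>Expand \<^term>\<open>Lmat f g \<mu>\<close> around \<open>\<mu> = -1\<close> against the residue at \<open>-1\<close> and
  around \<open>\<mu> = 0\<close> against the residue at \<open>0\<close>.\<close>
lemma Lax_compatibility:
  assumes C: "C' ** Lmat f g (-1) = Lmat f g (-1) ** C"
    and D: "D' ** Lmat f g 0 = Lmat f g 0 ** D"
    and CD: "(C' + D') ** Lmat_deriv f g - Lmat_deriv f g ** (C + D) = Lmat_deriv f g"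
    and \<mu>: "\<mu> \<noteq> 0" "\<mu> \<noteq> -1"
  shows "(smat (1/(1+\<mu>)) C' + smat (1/\<mu>) D') ** Lmat f g \<mu>
           - Lmat f g \<mu> ** (smat (1/(1+\<mu>)) C + smat (1/\<mu>) D) = Lmat_deriv f g"
proof -
  have "1 + \<mu> \<noteq> 0"
    using \<mu>(2) by (simp add: add_eq_0_iff)
  have eC: "C' ** Lmat f g \<mu> - Lmat f g \<mu> ** C = smat (1 + \<mu>) (C' ** Lmat_deriv f g - Lmat_deriv f g ** C)"
    using C Lmat_expand[of f g \<mu> "-1"]
    by (simp add: matrix_add_ldistrib matrix_add_rdistrib smat_mult_left smat_mult_right smat_diff
        add.commute)
  have eD: "D' ** Lmat f g \<mu> - Lmat f g \<mu> ** D = smat \<mu> (D' ** Lmat_deriv f g - Lmat_deriv f g ** D)"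
    using D Lmat_expand[of f g \<mu> 0]
    by (simp add: matrix_add_ldistrib matrix_add_rdistrib smat_mult_left smat_mult_right smat_diff)
  have "(smat (1/(1+\<mu>)) C' + smat (1/\<mu>) D') ** Lmat f g \<mu>
          - Lmat f g \<mu> ** (smat (1/(1+\<mu>)) C + smat (1/\<mu>) D)
      = smat (1/(1+\<mu>)) (C' ** Lmat f g \<mu> - Lmat f g \<mu> ** C)
          + smat (1/\<mu>) (D' ** Lmat f g \<mu> - Lmat f g \<mu> ** D)"
    by (simp add: matrix_add_ldistrib matrix_add_rdistrib smat_mult_left smat_mult_right smat_diff)
  also have "\<dots> = (C' ** Lmat_deriv f g - Lmat_deriv f g ** C) + (D' ** Lmat_deriv f g - Lmat_deriv f g ** D)"
    using \<mu>(1) \<open>1 + \<mu> \<noteq> 0\<close> by (simp add: eC eD smat_smat)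
  also have "\<dots> = (C' + D') ** Lmat_deriv f g - Lmat_deriv f g ** (C + D)"
    by (simp add: matrix_add_ldistrib matrix_add_rdistrib)
  finally show ?thesis
    using CD by simp
qed

lemma Lmat_deriv_commutator:
  assumes "M'$1$3 = 0" "M'$2$3 = 0" "M$1$2 = 0" "M$1$3 = 0" "M'$3$3 = M$1$1 + 1"
  shows "M' ** Lmat_deriv f g - Lmat_deriv f g ** M = Lmat_deriv f g"
  using assms by (simp add: matrix3_eq_iff matrix_mult_nth_3 Lmat_deriv_def algebra_simps)

definition Dres :: "complex \<Rightarrow> complex \<Rightarrow> complex \<Rightarrow> complex \<Rightarrow> complex \<Rightarrow> complex^3^3" where
  "Dres \<alpha> \<beta> U V X = mat3 (- (2*\<alpha> + \<beta>) / 3) (\<alpha> * U) X 0 ((\<alpha> - \<beta>) / 3) (\<beta> * V) 0 0 ((2*\<beta> + \<alpha>) / 3)"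

lemma Dres_Lmat_0:
  "Dres \<alpha> \<beta> (U + f) (V + g) (X + \<beta> * V * f - \<alpha> * (U + f) * g) ** Lmat f g 0
     = Lmat f g 0 ** Dres \<alpha> \<beta> U V X"
  by (simp add: Dres_def Lmat_def mat3_mult matrix3_eq_iff algebra_simps add_divide_distrib
      diff_divide_distrib)

lemma residue_sum_13_step:
  assumes C: "C' ** Lmat f g (-1) = Lmat f g (-1) ** C"
    and "\<alpha> * (U + f) + C'$1$2 = 0" "\<beta> * V + C$2$3 = 0"
  shows "C'$1$3 + (X + \<beta> * V * f - \<alpha> * (U + f) * g) = C$1$3 + X"
proof -
  have "C'$1$2 * g + C'$1$3 = C$1$3 + f * C$2$3"
    using arg_cong[OF C, of "\<lambda>M. M $ 1 $ 3"] by (simp add: matrix_mult_nth_3 Lmat_def)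
  with assms(2,3) show ?thesis
    by algebra
qed

lemma edge_compatibility:
  assumes C: "C' ** Lmat f g (-1) = Lmat f g (-1) ** C"
    and trace: "C'$1$1 + C'$2$2 + C'$3$3 = C$1$1 + C$2$2 + C$3$3 + 1"
    and U: "\<alpha> * U + C$1$2 = 0" "\<alpha> * (U + f) + C'$1$2 = 0"
    and V: "\<beta> * V + C$2$3 = 0" "\<beta> * (V + g) + C'$2$3 = 0"
    and X: "C$1$3 + X = 0" "C'$1$3 + (X + \<beta> * V * f - \<alpha> * (U + f) * g) = 0"
    and nz: "f \<noteq> 0" "g \<noteq> 0" and \<mu>: "\<mu> \<noteq> 0" "\<mu> \<noteq> -1"
  shows "(smat (1/(1+\<mu>)) C' + smat (1/\<mu>) (Dres \<alpha> \<beta> (U + f) (V + g) (X + \<beta> * V * f - \<alpha> * (U + f) * g)))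
           ** Lmat f g \<mu>
         - Lmat f g \<mu> ** (smat (1/(1+\<mu>)) C + smat (1/\<mu>) (Dres \<alpha> \<beta> U V X)) = Lmat_deriv f g"
proof (rule Lax_compatibility[OF C Dres_Lmat_0 Lmat_deriv_commutator \<mu>])
  have "C'$1$1 * f + C'$1$2 = C$1$2 + f * C$2$2" "C'$2$2 * g + C'$2$3 = C$2$3 + g * C$3$3"
    using arg_cong[OF C, of "\<lambda>M. M $ 1 $ 2"] arg_cong[OF C, of "\<lambda>M. M $ 2 $ 3"]
    by (simp_all add: matrix_mult_nth_3 Lmat_def)
  then have "f * \<alpha> = f * (C'$1$1 - C$2$2)" "g * \<beta> = g * (C'$2$2 - C$3$3)"
    using U V by algebra+
  then have "\<alpha> = C'$1$1 - C$2$2" "\<beta> = C'$2$2 - C$3$3"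
    using nz by simp_all
  with trace have "C'$3$3 + \<alpha> + \<beta> = C$1$1 + 1"
    by algebra
  then show "(C' + Dres \<alpha> \<beta> (U + f) (V + g) (X + \<beta> * V * f - \<alpha> * (U + f) * g)) $ 3 $ 3
      = (C + Dres \<alpha> \<beta> U V X) $ 1 $ 1 + 1"
    by (simp add: Dres_def field_simps, algebra)
qed (use U(1) V(2) X in \<open>simp_all add: Dres_def algebra_simps\<close>)

section \<open>Matrix-valued derivatives\<close>

definition has_mat_deriv :: "('a::real_normed_field \<Rightarrow> 'a^'n^'m) \<Rightarrow> 'a^'n^'m \<Rightarrow> 'a \<Rightarrow> bool" where
  "has_mat_deriv F F' \<mu> \<longleftrightarrow> (\<forall>i j. ((\<lambda>x. F x $ i $ j) has_field_derivative F' $ i $ j) (at \<mu>))"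

lemma has_mat_deriv_mult:
  assumes F: "has_mat_deriv F F' \<mu>" and G: "has_mat_deriv G G' \<mu>"
  shows "has_mat_deriv (\<lambda>x. F x ** G x) (F' ** G \<mu> + F \<mu> ** G') \<mu>"
  unfolding has_mat_deriv_def
proof (intro allI)
  fix i j
  have "((\<lambda>x. \<Sum>k\<in>UNIV. F x $ i $ k * G x $ k $ j) has_field_derivative
          (\<Sum>k\<in>UNIV. F' $ i $ k * G \<mu> $ k $ j + G' $ k $ j * F \<mu> $ i $ k)) (at \<mu>)"
    using F G unfolding has_mat_deriv_def by (intro DERIV_sum DERIV_mult) auto
  moreover have "(F' ** G \<mu> + F \<mu> ** G') $ i $ j
      = (\<Sum>k\<in>UNIV. F' $ i $ k * G \<mu> $ k $ j + G' $ k $ j * F \<mu> $ i $ k)"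
    by (simp add: matrix_matrix_mult_def sum.distrib mult.commute)
  ultimately show "((\<lambda>x. (F x ** G x) $ i $ j) has_field_derivative (F' ** G \<mu> + F \<mu> ** G') $ i $ j) (at \<mu>)"
    by (simp add: matrix_matrix_mult_def)
qed

lemma has_mat_deriv_transform_open:
  assumes "has_mat_deriv F F' \<mu>" "open S" "\<mu> \<in> S" "\<And>x. x \<in> S \<Longrightarrow> F x = G x"
  shows "has_mat_deriv G F' \<mu>"
  unfolding has_mat_deriv_def
proof (intro allI)
  fix i j
  show "((\<lambda>x. G x $ i $ j) has_field_derivative F' $ i $ j) (at \<mu>)"
    by (rule has_field_derivative_transform_within_open[where f = "\<lambda>x. F x $ i $ j"])
      (use assms in \<open>auto simp: has_mat_deriv_def\<close>)
qed

lemma has_mat_deriv_unique: "has_mat_deriv F A \<mu> \<Longrightarrow> has_mat_deriv F B \<mu> \<Longrightarrow> A = B"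
  unfolding has_mat_deriv_def vec_eq_iff by (metis DERIV_unique)

lemma has_mat_deriv_of_differentiable:
  assumes "\<And>i j. (\<lambda>x. F x $ i $ j) field_differentiable at \<mu>"
  obtains F' where "has_mat_deriv F F' \<mu>"
proof
  show "has_mat_deriv F (\<chi> i j. deriv (\<lambda>x. F x $ i $ j) \<mu>) \<mu>"
    using assms by (simp add: has_mat_deriv_def DERIV_deriv_iff_field_differentiable)
qed

lemma has_mat_deriv_Lmat: "has_mat_deriv (Lmat f g) (Lmat_deriv f g) \<mu>"
proof -
  have "((\<lambda>x. x * (1 / (f * g))) has_field_derivative 1 / (f * g)) (at \<mu>)"
    using DERIV_cmult_right[OF DERIV_ident] by (metis mult_1)
  then show ?thesis
    by (simp add: has_mat_deriv_def forall_3 Lmat_def Lmat_deriv_def)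
qed

lemma Linv_nth:
  "Linv f g x $ i $ j = (Ladj f g 0 $ i $ j + x * (Ladj f g 1 $ i $ j - Ladj f g 0 $ i $ j)) / (1 + x)"
  using exhaust_3[of i] exhaust_3[of j] by (auto simp: Linv_def Ladj_def)

lemma Linv_differentiable: "\<mu> \<noteq> -1 \<Longrightarrow> (\<lambda>x. Linv f g x $ i $ j) field_differentiable at \<mu>"
  unfolding Linv_nth
  by (intro field_differentiable_divide field_differentiable_add field_differentiable_mult
      field_differentiable_const field_differentiable_ident) (auto simp: add_eq_0_iff)

text \<open>The defect \<open>\<Psi>' - A \<Psi>\<close> is transported by the gauge transformation \<open>L\<close>, so it
  vanishes at one end of an edge iff it vanishes at the other.\<close>
lemma has_mat_deriv_gauge_iff:
  fixes P Q L Li :: "'a::real_normed_field \<Rightarrow> 'a^'n^'n"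
  assumes S: "open S" "\<mu> \<in> S"
    and Q: "\<And>x. x \<in> S \<Longrightarrow> Q x = L x ** P x" and P: "\<And>x. x \<in> S \<Longrightarrow> P x = Li x ** Q x"
    and L': "has_mat_deriv L H \<mu>" and Li': "\<And>i j. (\<lambda>x. Li x $ i $ j) field_differentiable at \<mu>"
    and inv: "Li \<mu> ** L \<mu> = mat 1"
    and compat: "A' ** L \<mu> - L \<mu> ** A = H"
  shows "has_mat_deriv P (A ** P \<mu>) \<mu> \<longleftrightarrow> has_mat_deriv Q (A' ** Q \<mu>) \<mu>"
proof -
  have "A' ** L \<mu> = H + L \<mu> ** A"
    using compat by (simp add: diff_eq_eq)
  then have A': "A' ** Q \<mu> = H ** P \<mu> + L \<mu> ** (A ** P \<mu>)"
    by (simp add: Q[OF S(2)] matrix_mul_assoc matrix_add_rdistrib)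
  have Q': "has_mat_deriv Q (H ** P \<mu> + L \<mu> ** P') \<mu>" if "has_mat_deriv P P' \<mu>" for P'
    using has_mat_deriv_mult[OF L' that] by (rule has_mat_deriv_transform_open[OF _ S]) (simp add: Q)
  show ?thesis
  proof
    assume "has_mat_deriv P (A ** P \<mu>) \<mu>"
    then show "has_mat_deriv Q (A' ** Q \<mu>) \<mu>"
      unfolding A' by (rule Q')
  next
    assume Q_ode: "has_mat_deriv Q (A' ** Q \<mu>) \<mu>"
    obtain Li'' where Li'': "has_mat_deriv Li Li'' \<mu>"
      using Li' by (rule has_mat_deriv_of_differentiable)
    define P' where "P' = Li'' ** Q \<mu> + Li \<mu> ** (A' ** Q \<mu>)"
    have "has_mat_deriv (\<lambda>x. Li x ** Q x) P' \<mu>"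
      unfolding P'_def using Li'' Q_ode by (rule has_mat_deriv_mult)
    then have P': "has_mat_deriv P P' \<mu>"
      by (rule has_mat_deriv_transform_open[OF _ S]) (simp add: P)
    have "H ** P \<mu> + L \<mu> ** P' = H ** P \<mu> + L \<mu> ** (A ** P \<mu>)"
      using has_mat_deriv_unique[OF Q'[OF P'] Q_ode] A' by simp
    then have "P' = A ** P \<mu>"
      using matrix_left_cancel[OF inv] by simp
    with P' show "has_mat_deriv P (A ** P \<mu>) \<mu>"
      by simp
  qed
qed

lemma has_mat_deriv_Lmat_gauge_iff:
  fixes P Q :: "complex \<Rightarrow> complex^3^3"
  assumes S: "open S" "\<mu> \<in> S" "-1 \<notin> S"
    and Q: "\<And>x. x \<in> S \<Longrightarrow> Q x = Lmat f g x ** P x"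
    and P: "\<And>x. x \<in> S \<Longrightarrow> P x = Linv f g x ** Q x"
    and nz: "f \<noteq> 0" "g \<noteq> 0"
    and compat: "A' ** Lmat f g \<mu> - Lmat f g \<mu> ** A = Lmat_deriv f g"
  shows "has_mat_deriv P (A ** P \<mu>) \<mu> \<longleftrightarrow> has_mat_deriv Q (A' ** Q \<mu>) \<mu>"
proof -
  have "\<mu> \<noteq> -1"
    using S by auto
  show ?thesis
    by (rule has_mat_deriv_gauge_iff[OF S(1,2) Q P has_mat_deriv_Lmat])
      (use \<open>\<mu> \<noteq> -1\<close> Linv_differentiable Linv_Lmat(1)[OF nz] compat in auto)
qed

definition diag_powr :: "complex \<Rightarrow> complex \<Rightarrow> complex \<Rightarrow> complex \<Rightarrow> complex^3^3" where
  "diag_powr \<delta>\<^sub>1 \<delta>\<^sub>2 \<delta>\<^sub>3 \<mu> = mat3 (\<mu> powr \<delta>\<^sub>1) 0 0 0 (\<mu> powr \<delta>\<^sub>2) 0 0 0 (\<mu> powr \<delta>\<^sub>3)"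

lemma has_mat_deriv_diag_powr:
  assumes "\<mu> \<notin> \<real>\<^sub>\<le>\<^sub>0"
  shows "has_mat_deriv (diag_powr \<delta>\<^sub>1 \<delta>\<^sub>2 \<delta>\<^sub>3)
    (smat (1/\<mu>) (mat3 \<delta>\<^sub>1 0 0 0 \<delta>\<^sub>2 0 0 0 \<delta>\<^sub>3) ** diag_powr \<delta>\<^sub>1 \<delta>\<^sub>2 \<delta>\<^sub>3 \<mu>) \<mu>"
proof -
  have "((\<lambda>x. x powr \<delta>) has_field_derivative \<delta> / \<mu> * \<mu> powr \<delta>) (at \<mu>)" for \<delta>
    using has_field_derivative_powr[OF assms, of \<delta>] by (simp add: powr_diff)
  then show ?thesis
    by (simp add: has_mat_deriv_def forall_3 diag_powr_def smat_mat3 mat3_mult)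
qed

lemma diag_powr_det: "\<mu> \<noteq> 0 \<Longrightarrow> det (diag_powr \<delta>\<^sub>1 \<delta>\<^sub>2 \<delta>\<^sub>3 \<mu>) \<noteq> 0"
  by (simp add: diag_powr_def det_mat3)

section \<open>Iteration over the integers\<close>

fun iterate_up :: "(int \<Rightarrow> 'a \<Rightarrow> 'a) \<Rightarrow> 'a \<Rightarrow> nat \<Rightarrow> 'a" where
  "iterate_up f x 0 = x"
| "iterate_up f x (Suc n) = f (int n) (iterate_up f x n)"

fun iterate_down :: "(int \<Rightarrow> 'a \<Rightarrow> 'a) \<Rightarrow> 'a \<Rightarrow> nat \<Rightarrow> 'a" where
  "iterate_down g x 0 = x"
| "iterate_down g x (Suc n) = g (- int n - 1) (iterate_down g x n)"

text \<open>The solution of \<open>y 0 = x\<close>, \<open>y (n + 1) = f n (y n)\<close> on all of \<open>\<int>\<close>, running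
  backwards with \<open>g n\<close>, which has to be a right inverse of \<open>f n\<close>.\<close>
definition int_iterate :: "(int \<Rightarrow> 'a \<Rightarrow> 'a) \<Rightarrow> (int \<Rightarrow> 'a \<Rightarrow> 'a) \<Rightarrow> 'a \<Rightarrow> int \<Rightarrow> 'a" where
  "int_iterate f g x n =
     (if 0 \<le> n then iterate_up f x (nat n) else iterate_down g x (nat (- n)))"

lemma int_iterate_0 [simp]: "int_iterate f g x 0 = x"
  by (simp add: int_iterate_def)

lemma int_iterate_nonneg: "int_iterate f g x (int j) = iterate_up f x j"
  by (simp add: int_iterate_def)

lemma int_iterate_nonpos: "int_iterate f g x (- int j) = iterate_down g x j"
  by (cases j) (simp_all add: int_iterate_def nat_add_distrib)

lemma int_iterate_step:
  assumes "\<And>n y. f n (g n y) = y"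
  shows "int_iterate f g x (n + 1) = f n (int_iterate f g x n)"
proof (cases "0 \<le> n")
  case True
  then obtain j where "n = int j"
    using nonneg_int_cases by blast
  then show ?thesis
    using int_iterate_nonneg[of f g x "Suc j"] int_iterate_nonneg[of f g x j] by (simp add: add.commute)
next
  case False
  define j where "j = nat (- n - 1)"
  have j: "n = - int (Suc j)" "n + 1 = - int j"
    using False by (simp_all add: j_def)
  have "int_iterate f g x n = g (- int j - 1) (iterate_down g x j)"
    using int_iterate_nonpos[of f g x "Suc j"] by (simp add: j(1))
  moreover have "- int j - 1 = n"
    by (simp add: j(1))
  ultimately show ?thesis
    using int_iterate_nonpos[of f g x j] by (simp add: j(2) assms)
qed

lemma int_iterate_invariant:
  assumes "P x" "\<And>n y. P y \<Longrightarrow> P (f n y)" "\<And>n y. P y \<Longrightarrow> P (g n y)"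
  shows "P (int_iterate f g x n)"
proof -
  have "P (iterate_up f x k)" "P (iterate_down g x k)" for k
    by (induction k) (simp_all add: assms)
  then show ?thesis
    by (simp add: int_iterate_def)
qed

lemma int_propagate:
  assumes "P 0" "\<And>i. P i \<longleftrightarrow> P (i + 1)"
  shows "P (n :: int)"
proof (induction n rule: int_induct[where k = 0])
  case base
  show ?case
    by (fact assms(1))
next
  case (step1 i)
  then show ?case
    using assms(2) by blast
next
  case (step2 i)
  then show ?case
    using assms(2)[of "i - 1"] by simp
qed

lemma lattice_propagate:
  fixes P :: "int \<Rightarrow> int \<Rightarrow> int \<Rightarrow> bool"
  assumes "P 0 0 0"
    and "\<And>k l m. P k l m \<longleftrightarrow> P (k + 1) l m"
    and "\<And>k l m. P k l m \<longleftrightarrow> P k (l + 1) m"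
    and "\<And>k l m. P k l m \<longleftrightarrow> P k l (m + 1)"
  shows "P k l m"
proof -
  have "P k 0 0" for k
    by (rule int_propagate[where P = "\<lambda>k. P k 0 0"]) (fact assms(1), rule assms(2))
  then have "P k l 0" for k l
    by (rule int_propagate[where P = "\<lambda>l. P k l 0"]) (rule assms(3))
  then show ?thesis
    by (rule int_propagate[where P = "\<lambda>m. P k l m"]) (rule assms(4))
qed

section \<open>Functions on the triangular lattice\<close>

lemma vertex_fun_shift:
  assumes "vertex_fun w"
  shows "w (k + n) (l + n) (m + n) = w k l m"
proof (induction n rule: int_propagate)
  case (2 i)
  have "w (k + (i + 1)) (l + (i + 1)) (m + (i + 1)) = w (k + i) (l + i) (m + i)"
    using assms unfolding vertex_fun_def by (metis add.assoc)
  then show ?case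
    by simp
qed simp

lemma vertex_fun_reduce: "vertex_fun w \<Longrightarrow> w k l m = w (k - m) (l - m) 0"
  using vertex_fun_shift[of w "k - m" m "l - m" 0] by simp

lemma d_vertex_fun_reduce:
  assumes "vertex_fun w"
  shows "d0 w k l m = d0 w (k-m) (l-m) 0" "d2 w k l m = d2 w (k-m) (l-m) 0"
    "d4 w k l m = d4 w (k-m) (l-m) 0"
  using vertex_fun_reduce[OF assms, of "k+1" l m] vertex_fun_reduce[OF assms, of k "l+1" m]
    vertex_fun_reduce[OF assms, of k l "m+1"] vertex_fun_reduce[OF assms, of "k-m" "l-m" 1]
    vertex_fun_reduce[OF assms, of k l m]
  by (simp_all add: d0_def d2_def d4_def algebra_simps)

lemma d_backward_eq:
  "d3 w k l m = d0 w (k-1) l m" "d5 w k l m = d2 w k (l-1) m" "d1 w k l m = d4 w k l (m-1)"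
  by (simp_all add: d0_def d1_def d2_def d3_def d4_def d5_def)

definition primitive :: "(int \<Rightarrow> complex) \<Rightarrow> int \<Rightarrow> complex" where
  "primitive w = int_iterate (\<lambda>i s. s + w i) (\<lambda>i s. s - w i) 0"

lemma primitive_0 [simp]: "primitive w 0 = 0"
  by (simp add: primitive_def)

lemma primitive_step: "primitive w (n + 1) = primitive w n + w n"
  unfolding primitive_def by (rule int_iterate_step) simp

text \<open>Discrete Poincare lemma: the hypotheses say that the edge values \<open>w0, w2, w4\<close> sum to zero
  around the positively oriented triangles \<open>(z, z + 1, z + 1 + \<omega>)\<close> and
  \<open>(z, z + 1, z + 1 + \<omega>\<^sup>2)\<close>.\<close>
lemma closed_edge_form_exact:
  fixes w0 w2 w4 :: vfun
  assumes vert: "vertex_fun w0" "vertex_fun w2" "vertex_fun w4"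
    and tri1: "\<And>k l m. w0 k l m + w2 (k+1) l m + w4 (k+1) (l+1) m = 0"
    and tri2: "\<And>k l m. w0 k l m + w4 (k+1) l m + w2 (k+1) l (m+1) = 0"
  obtains F where "vertex_fun F" "F 0 0 0 = 0"
    "\<And>k l m. d0 F k l m = w0 k l m" "\<And>k l m. d2 F k l m = w2 k l m" "\<And>k l m. d4 F k l m = w4 k l m"
proof
  define G where "G x y = primitive (\<lambda>i. w0 i 0 0) x + primitive (\<lambda>j. w2 x j 0) y" for x y
  have G_y: "G x (y + 1) = G x y + w2 x y 0" for x y
    by (simp add: G_def primitive_step)
  have square: "w0 x y 0 + w2 (x+1) y 0 = w2 x y 0 + w0 x (y+1) 0" for x y
    using tri1[of x y 0] tri2[of x "y + 1" 0] vert(2)[unfolded vertex_fun_def, rule_format, of x y 0]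
    by (simp add: algebra_simps) algebra
  have G_x: "G (x + 1) y = G x y + w0 x y 0" for x y
  proof (induction y rule: int_propagate)
    case 1
    show ?case
      by (simp add: G_def primitive_step)
  next
    case (2 y)
    show ?case
      using square[of x y] G_y[of "x + 1" y] G_y[of x y] by (intro iffI) algebra+
  qed
  define F where "F k l m = G (k - m) (l - m)" for k l m
  show "vertex_fun F" "F 0 0 0 = 0"
    by (simp_all add: F_def vertex_fun_def G_def)
  show "d0 F k l m = w0 k l m" for k l m
    using G_x[of "k - m" "l - m"] vertex_fun_reduce[OF vert(1), of k l m]
    by (simp add: d0_def F_def algebra_simps)
  show "d2 F k l m = w2 k l m" for k l m
    using G_y[of "k - m" "l - m"] vertex_fun_reduce[OF vert(2), of k l m]
    by (simp add: d2_def F_def algebra_simps)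
  show "d4 F k l m = w4 k l m" for k l m
    using G_x[of "k - m - 1" "l - m - 1"] G_y[of "k - m" "l - m - 1"]
      tri1[of "k - m - 1" "l - m - 1" 0] vertex_fun_reduce[OF vert(3), of k l m]
    by (simp add: d4_def F_def algebra_simps) algebra
qed

section \<open>The cross-ratio system and its wave function\<close>

locale cross_ratio_lattice =
  fixes u v :: vfun
  assumes u_vert: "vertex_fun u" and v_vert: "vertex_fun v"
    and nondeg_f: "\<forall>k l m. d0 u k l m \<noteq> 0 \<and> d2 u k l m \<noteq> 0 \<and> d4 u k l m \<noteq> 0"
    and nondeg_g: "\<forall>k l m. d0 v k l m \<noteq> 0 \<and> d2 v k l m \<noteq> 0 \<and> d4 v k l m \<noteq> 0"
    and tri: "triangle_eqs u v"
begin

abbreviation L0 :: "int \<Rightarrow> int \<Rightarrow> int \<Rightarrow> complex \<Rightarrow> complex^3^3" where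
  "L0 k l m \<equiv> Lmat (d0 u k l m) (d0 v k l m)"

abbreviation L2 :: "int \<Rightarrow> int \<Rightarrow> int \<Rightarrow> complex \<Rightarrow> complex^3^3" where
  "L2 k l m \<equiv> Lmat (d2 u k l m) (d2 v k l m)"

abbreviation L4 :: "int \<Rightarrow> int \<Rightarrow> int \<Rightarrow> complex \<Rightarrow> complex^3^3" where
  "L4 k l m \<equiv> Lmat (d4 u k l m) (d4 v k l m)"

lemma u_shift [simp]: "u (k+1) (l+1) (m+1) = u k l m"
  using u_vert by (simp add: vertex_fun_def)

lemma v_shift [simp]: "v (k+1) (l+1) (m+1) = v k l m"
  using v_vert by (simp add: vertex_fun_def)

lemma d_nonzero [simp]:
  "d0 u k l m \<noteq> 0" "d2 u k l m \<noteq> 0" "d4 u k l m \<noteq> 0"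
  "d0 v k l m \<noteq> 0" "d2 v k l m \<noteq> 0" "d4 v k l m \<noteq> 0"
  using nondeg_f nondeg_g by auto

lemma u_distinct:
  "u (k+1) l m \<noteq> u k l m" "u k (l+1) m \<noteq> u k l m" "u k l (m+1) \<noteq> u k l m"
  "u (k+1) (l+1) m \<noteq> u k l m" "u (k+1) l (m+1) \<noteq> u k l m" "u k (l+1) (m+1) \<noteq> u k l m"
  using d_nonzero(1-3)[of k l m] d_nonzero(3)[of "k+1" "l+1" m] d_nonzero(2)[of "k+1" l "m+1"]
    d_nonzero(1)[of k "l+1" "m+1"]
  by (auto simp: d0_def d2_def d4_def)

lemma v_distinct:
  "v (k+1) l m \<noteq> v k l m" "v k (l+1) m \<noteq> v k l m" "v k l (m+1) \<noteq> v k l m"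
  "v (k+1) (l+1) m \<noteq> v k l m" "v (k+1) l (m+1) \<noteq> v k l m" "v k (l+1) (m+1) \<noteq> v k l m"
  using d_nonzero(4-6)[of k l m] d_nonzero(6)[of "k+1" "l+1" m] d_nonzero(5)[of "k+1" l "m+1"]
    d_nonzero(4)[of k "l+1" "m+1"]
  by (auto simp: d0_def d2_def d4_def)

lemmas values_distinct = u_distinct v_distinct u_distinct[symmetric] v_distinct[symmetric]

lemma triangle_rel_0_2:
  "triangle_rel (u k l m) (v k l m) (u (k+1) l m) (v (k+1) l m) (u (k+1) (l+1) m) (v (k+1) (l+1) m)"
  using tri values_distinct
  by (intro triangle_rel_of_cross_ratio) (auto simp: triangle_eqs_def tri_eq_def)

lemma triangle_rel_0_4:
  "triangle_rel (u k l m) (v k l m) (u (k+1) l m) (v (k+1) l m) (u (k+1) l (m+1)) (v (k+1) l (m+1))"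
  using tri values_distinct
  by (intro triangle_rel_of_cross_ratio) (auto simp: triangle_eqs_def tri_eq_def)

lemma triangle_rel_2_0:
  "triangle_rel (u k l m) (v k l m) (u k (l+1) m) (v k (l+1) m) (u (k+1) (l+1) m) (v (k+1) (l+1) m)"
  using triangle_rel_0_4[of k "l+1" m] by (simp, metis triangle_rel_rotate)

lemma triangle_rel_4_0:
  "triangle_rel (u k l m) (v k l m) (u k l (m+1)) (v k l (m+1)) (u (k+1) l (m+1)) (v (k+1) l (m+1))"
  using triangle_rel_0_2[of k l "m+1"] by (simp, metis triangle_rel_rotate)

lemma triangle_rel_2_4:
  "triangle_rel (u k l m) (v k l m) (u k (l+1) m) (v k (l+1) m) (u k (l+1) (m+1)) (v k (l+1) (m+1))"
  using triangle_rel_0_2[of "k-1" l m] u_shift[of "k-1" l m] v_shift[of "k-1" l m]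
  by (simp add: triangle_rel_rotate)

lemma triangle_rel_4_2:
  "triangle_rel (u k l m) (v k l m) (u k l (m+1)) (v k l (m+1)) (u k (l+1) (m+1)) (v k (l+1) (m+1))"
  using triangle_rel_0_4[of "k-1" l m] u_shift[of "k-1" l m] v_shift[of "k-1" l m]
  by (simp add: triangle_rel_rotate)

lemma L0_L2_commute: "L2 (k+1) l m \<mu> ** L0 k l m \<mu> = L0 k (l+1) m \<mu> ** L2 k l m \<mu>"
  unfolding d0_def d2_def
  by (rule Lmat_rhombus[OF triangle_rel_0_2 triangle_rel_2_0]) (simp_all add: values_distinct)

lemma L0_L4_commute: "L4 (k+1) l m \<mu> ** L0 k l m \<mu> = L0 k l (m+1) \<mu> ** L4 k l m \<mu>"
  unfolding d0_def d4_def
  by (rule Lmat_rhombus[OF triangle_rel_0_4 triangle_rel_4_0]) (simp_all add: values_distinct)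

lemma L2_L4_commute: "L4 k (l+1) m \<mu> ** L2 k l m \<mu> = L2 k l (m+1) \<mu> ** L4 k l m \<mu>"
  unfolding d2_def d4_def
  by (rule Lmat_rhombus[OF triangle_rel_2_4 triangle_rel_4_2]) (simp_all add: values_distinct)

lemma L_monodromy: "L4 (k+1) (l+1) m \<mu> ** L2 (k+1) l m \<mu> ** L0 k l m \<mu> = mat (1 + \<mu>)"
proof -
  have "d4 u (k+1) (l+1) m = u k l m - u (k+1) (l+1) m" "d4 v (k+1) (l+1) m = v k l m - v (k+1) (l+1) m"
    by (simp_all add: d4_def)
  then show ?thesis
    unfolding d2_def d0_def
    by (simp only:) (rule Lmat_triangle_monodromy[OF triangle_rel_0_2]; simp add: values_distinct)
qed

lemma Linv_L:
  assumes "\<mu> \<noteq> -1"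
  shows "Linv (d0 u k l m) (d0 v k l m) \<mu> ** L0 k l m \<mu> = mat 1"
    "L0 k l m \<mu> ** Linv (d0 u k l m) (d0 v k l m) \<mu> = mat 1"
    "Linv (d2 u k l m) (d2 v k l m) \<mu> ** L2 k l m \<mu> = mat 1"
    "L2 k l m \<mu> ** Linv (d2 u k l m) (d2 v k l m) \<mu> = mat 1"
    "Linv (d4 u k l m) (d4 v k l m) \<mu> ** L4 k l m \<mu> = mat 1"
    "L4 k l m \<mu> ** Linv (d4 u k l m) (d4 v k l m) \<mu> = mat 1"
  using Linv_Lmat[OF _ _ assms] by simp_all

lemma potential_exists:
  obtains a where "vertex_fun a" "a 0 0 0 = 0"
    "\<And>k l m. d0 a k l m = v k l m * d0 u k l m" "\<And>k l m. d2 a k l m = v k l m * d2 u k l m"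
    "\<And>k l m. d4 a k l m = v k l m * d4 u k l m"
proof (rule closed_edge_form_exact)
  show "vertex_fun (\<lambda>k l m. v k l m * d0 u k l m)" "vertex_fun (\<lambda>k l m. v k l m * d2 u k l m)"
    "vertex_fun (\<lambda>k l m. v k l m * d4 u k l m)"
    unfolding vertex_fun_def d0_def d2_def d4_def
    by (intro allI, use u_shift[of "k+1" l m for k l m] u_shift[of k "l+1" m for k l m]
        u_shift[of k l "m+1" for k l m] in simp)+
  show "v k l m * d0 u k l m + v (k+1) l m * d2 u (k+1) l m + v (k+1) (l+1) m * d4 u (k+1) (l+1) m = 0"
    for k l m
    using triangle_rel_closed_form[OF triangle_rel_0_2[of k l m]] by (simp add: d0_def d2_def d4_def)
  show "v k l m * d0 u k l m + v (k+1) l m * d4 u (k+1) l m + v (k+1) l (m+1) * d2 u (k+1) l (m+1) = 0"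
    for k l m
    using triangle_rel_closed_form[OF triangle_rel_0_4[of k l m]] by (simp add: d0_def d2_def d4_def)
qed (rule that)

lemma dual_potential:
  assumes "d0 a k l m = v k l m * d0 u k l m" "d2 a k l m = v k l m * d2 u k l m"
    "d4 a k l m = v k l m * d4 u k l m"
  shows "d0 (\<lambda>k l m. u k l m * v k l m - a k l m) k l m = u (k+1) l m * d0 v k l m"
    "d2 (\<lambda>k l m. u k l m * v k l m - a k l m) k l m = u k (l+1) m * d2 v k l m"
    "d4 (\<lambda>k l m. u k l m * v k l m - a k l m) k l m = u k l (m+1) * d4 v k l m"
  using assms by (simp_all add: d0_def d2_def d4_def algebra_simps)

lemmas d_reduce = d_vertex_fun_reduce[OF u_vert] d_vertex_fun_reduce[OF v_vert]

text \<open>The plane \<open>m = 0\<close> is a fundamental domain of the shift \<open>(1,1,1)\<close>. The wave function is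
  transported from its initial value \<open>\<Psi>\<^sub>0\<close> along the \<open>k\<close>-axis and then along the
  \<open>l\<close>-lines of this plane, and extended to \<open>\<int>\<^sup>3\<close> by the quasi-periodicity
  \<open>\<Psi>(z + (1,1,1)) = (1 + \<mu>) \<Psi>(z)\<close>.\<close>
definition wave_axis :: "(complex \<Rightarrow> complex^3^3) \<Rightarrow> int \<Rightarrow> complex \<Rightarrow> complex^3^3" where
  "wave_axis \<Psi>\<^sub>0 x \<mu> = int_iterate (\<lambda>i M. L0 i 0 0 \<mu> ** M)
     (\<lambda>i M. Linv (d0 u i 0 0) (d0 v i 0 0) \<mu> ** M) (\<Psi>\<^sub>0 \<mu>) x"

definition wave_plane :: "(complex \<Rightarrow> complex^3^3) \<Rightarrow> int \<Rightarrow> int \<Rightarrow> complex \<Rightarrow> complex^3^3" where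
  "wave_plane \<Psi>\<^sub>0 x y \<mu> = int_iterate (\<lambda>j M. L2 x j 0 \<mu> ** M)
     (\<lambda>j M. Linv (d2 u x j 0) (d2 v x j 0) \<mu> ** M) (wave_axis \<Psi>\<^sub>0 x \<mu>) y"

definition wave :: "(complex \<Rightarrow> complex^3^3) \<Rightarrow> int \<Rightarrow> int \<Rightarrow> int \<Rightarrow> complex \<Rightarrow> complex^3^3" where
  "wave \<Psi>\<^sub>0 k l m \<mu> = smat ((1 + \<mu>) powi m) (wave_plane \<Psi>\<^sub>0 (k - m) (l - m) \<mu>)"

lemma wave_origin: "wave \<Psi>\<^sub>0 0 0 0 = \<Psi>\<^sub>0"
  by (simp add: fun_eq_iff wave_def wave_plane_def wave_axis_def)

lemma wave_plane_step_y:
  "\<mu> \<noteq> -1 \<Longrightarrow> wave_plane \<Psi>\<^sub>0 x (y + 1) \<mu> = L2 x y 0 \<mu> ** wave_plane \<Psi>\<^sub>0 x y \<mu>"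
  unfolding wave_plane_def by (rule int_iterate_step) (simp add: matrix_mul_assoc Linv_L)

lemma wave_plane_step_x:
  assumes \<mu>: "\<mu> \<noteq> -1"
  shows "wave_plane \<Psi>\<^sub>0 (x + 1) y \<mu> = L0 x y 0 \<mu> ** wave_plane \<Psi>\<^sub>0 x y \<mu>"
proof (induction y rule: int_propagate)
  case 1
  show ?case
    unfolding wave_plane_def wave_axis_def int_iterate_0
    by (rule int_iterate_step) (simp add: matrix_mul_assoc Linv_L \<mu>)
next
  case (2 y)
  have "wave_plane \<Psi>\<^sub>0 (x+1) (y+1) \<mu> = L0 x (y+1) 0 \<mu> ** wave_plane \<Psi>\<^sub>0 x (y+1) \<mu> \<longleftrightarrow>
      L2 (x+1) y 0 \<mu> ** wave_plane \<Psi>\<^sub>0 (x+1) y \<mu>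
        = L2 (x+1) y 0 \<mu> ** (L0 x y 0 \<mu> ** wave_plane \<Psi>\<^sub>0 x y \<mu>)"
    by (simp add: wave_plane_step_y[OF \<mu>] matrix_mul_assoc L0_L2_commute)
  then show ?case
    using matrix_left_cancel[OF Linv_L(3)[OF \<mu>, of "x+1" y 0]] by simp
qed

lemma wave_plane_diag:
  assumes \<mu>: "\<mu> \<noteq> -1"
  shows "L4 x y 0 \<mu> ** wave_plane \<Psi>\<^sub>0 x y \<mu> = smat (1 + \<mu>) (wave_plane \<Psi>\<^sub>0 (x - 1) (y - 1) \<mu>)"
proof -
  have "wave_plane \<Psi>\<^sub>0 x y \<mu> = L2 x (y-1) 0 \<mu> ** (L0 (x-1) (y-1) 0 \<mu> ** wave_plane \<Psi>\<^sub>0 (x-1) (y-1) \<mu>)"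
    using wave_plane_step_y[OF \<mu>, of \<Psi>\<^sub>0 x "y-1"] wave_plane_step_x[OF \<mu>, of \<Psi>\<^sub>0 "x-1" "y-1"] by simp
  then show ?thesis
    using L_monodromy[of "x-1" "y-1" 0 \<mu>] by (simp add: matrix_mul_assoc smat_eq_mat_mult)
qed

lemma wave_step_0: "\<mu> \<noteq> -1 \<Longrightarrow> wave \<Psi>\<^sub>0 (k+1) l m \<mu> = L0 k l m \<mu> ** wave \<Psi>\<^sub>0 k l m \<mu>"
  using wave_plane_step_x[of \<mu> \<Psi>\<^sub>0 "k-m" "l-m"]
  by (simp add: wave_def smat_mult_right d_reduce(1,4)[of k l m] algebra_simps)

lemma wave_step_2: "\<mu> \<noteq> -1 \<Longrightarrow> wave \<Psi>\<^sub>0 k (l+1) m \<mu> = L2 k l m \<mu> ** wave \<Psi>\<^sub>0 k l m \<mu>"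
  using wave_plane_step_y[of \<mu> \<Psi>\<^sub>0 "k-m" "l-m"]
  by (simp add: wave_def smat_mult_right d_reduce(2,5)[of k l m] algebra_simps)

lemma wave_step_4:
  assumes \<mu>: "\<mu> \<noteq> -1"
  shows "wave \<Psi>\<^sub>0 k l (m+1) \<mu> = L4 k l m \<mu> ** wave \<Psi>\<^sub>0 k l m \<mu>"
proof -
  have "1 + \<mu> \<noteq> 0"
    using \<mu> by (simp add: add_eq_0_iff)
  then have "(1 + \<mu>) powi (m + 1) = (1 + \<mu>) powi m * (1 + \<mu>)"
    by (simp add: power_int_add_1)
  then show ?thesis
    using wave_plane_diag[OF \<mu>, of "k-m" "l-m" \<Psi>\<^sub>0]
    by (simp add: wave_def smat_mult_right smat_smat d_reduce(3,6)[of k l m] algebra_simps)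
qed

lemma wave_shift:
  assumes "\<mu> \<noteq> -1"
  shows "wave \<Psi>\<^sub>0 (k+n) (l+n) (m+n) \<mu> = smat ((1 + \<mu>) powi n) (wave \<Psi>\<^sub>0 k l m \<mu>)"
proof -
  have "1 + \<mu> \<noteq> 0"
    using assms by (simp add: add_eq_0_iff)
  then show ?thesis
    by (simp add: wave_def smat_smat power_int_add mult.commute)
qed

lemma wave_back:
  assumes "\<mu> \<noteq> -1"
  shows "wave \<Psi>\<^sub>0 k l m \<mu> = Linv (d0 u k l m) (d0 v k l m) \<mu> ** wave \<Psi>\<^sub>0 (k+1) l m \<mu>"
    "wave \<Psi>\<^sub>0 k l m \<mu> = Linv (d2 u k l m) (d2 v k l m) \<mu> ** wave \<Psi>\<^sub>0 k (l+1) m \<mu>"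
    "wave \<Psi>\<^sub>0 k l m \<mu> = Linv (d4 u k l m) (d4 v k l m) \<mu> ** wave \<Psi>\<^sub>0 k l (m+1) \<mu>"
  by (simp_all add: wave_step_0 wave_step_2 wave_step_4 assms matrix_mul_assoc Linv_L)

lemma det_wave:
  assumes "\<mu> \<noteq> -1" "det (\<Psi>\<^sub>0 \<mu>) \<noteq> 0"
  shows "det (wave \<Psi>\<^sub>0 k l m \<mu>) \<noteq> 0"
proof -
  have "1 + \<mu> \<noteq> 0"
    using assms(1) by (simp add: add_eq_0_iff)
  have det_L: "det (Lmat f g \<mu> ** M) \<noteq> 0" if "f \<noteq> 0" "g \<noteq> 0" "det M \<noteq> 0" for f g M
    using that \<open>1 + \<mu> \<noteq> 0\<close> by (simp add: det_mul det_Lmat)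
  have det_Linv: "det (Linv f g \<mu> ** M) \<noteq> 0" if "f \<noteq> 0" "g \<noteq> 0" "det M \<noteq> 0" for f g M
    using that Linv_Lmat(1)[OF that(1,2) assms(1)] det_mul det_I by (metis mult_eq_0_iff one_neq_zero)
  have "det (wave_axis \<Psi>\<^sub>0 x \<mu>) \<noteq> 0" for x
    unfolding wave_axis_def by (rule int_iterate_invariant) (simp_all add: assms det_L det_Linv)
  then have "det (wave_plane \<Psi>\<^sub>0 x y \<mu>) \<noteq> 0" for x y
    unfolding wave_plane_def by (rule int_iterate_invariant) (simp_all add: det_L det_Linv)
  then show ?thesis
    using \<open>1 + \<mu> \<noteq> 0\<close> by (simp add: wave_def det_smat power_int_not_zero)
qed

end

section \<open>Isomonodromy\<close>

lemma ball_2_1_Re: "(\<mu> :: complex) \<in> ball 2 1 \<Longrightarrow> 1 < Re \<mu>"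
  using abs_Re_le_cmod[of "2 - \<mu>"] by (simp add: dist_norm)

lemma ball_2_1_not_nonpos: "(\<mu> :: complex) \<in> ball 2 1 \<Longrightarrow> \<mu> \<notin> \<real>\<^sub>\<le>\<^sub>0"
  using ball_2_1_Re by (fastforce simp: complex_nonpos_Reals_iff)

lemma ball_2_1_ne: "(\<mu> :: complex) \<in> ball 2 1 \<Longrightarrow> \<mu> \<noteq> 0" "(\<mu> :: complex) \<in> ball 2 1 \<Longrightarrow> \<mu> \<noteq> -1"
  using ball_2_1_Re by fastforce+

locale isomonodromic_lattice = cross_ratio_lattice +
  fixes \<alpha> \<beta> :: complex and a a' :: vfun
  assumes u0: "u 0 0 0 = 0" and v0: "v 0 0 0 = 0"
    and nondeg_den: "\<forall>k l m.
          d0 u k l m * d0 v k l m + d0 v k l m * d3 u k l m + d3 u k l m * d3 v k l m \<noteq> 0 \<and>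
          d2 u k l m * d2 v k l m + d2 v k l m * d5 u k l m + d5 u k l m * d5 v k l m \<noteq> 0 \<and>
          d4 u k l m * d4 v k l m + d4 v k l m * d1 u k l m + d1 u k l m * d1 v k l m \<noteq> 0"
    and constr_u: "\<forall>k l m. \<alpha> * u k l m =
          of_int k * (d0 u k l m * d0 v k l m * d3 u k l m) /
            (d0 u k l m * d0 v k l m + d0 v k l m * d3 u k l m + d3 u k l m * d3 v k l m)
        + of_int l * (d2 u k l m * d2 v k l m * d5 u k l m) /
            (d2 u k l m * d2 v k l m + d2 v k l m * d5 u k l m + d5 u k l m * d5 v k l m)
        + of_int m * (d4 u k l m * d4 v k l m * d1 u k l m) /
            (d4 u k l m * d4 v k l m + d4 v k l m * d1 u k l m + d1 u k l m * d1 v k l m)"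
    and constr_v: "\<forall>k l m. \<beta> * v k l m =
          of_int k * (d0 v k l m * d3 u k l m * d3 v k l m) /
            (d0 u k l m * d0 v k l m + d0 v k l m * d3 u k l m + d3 u k l m * d3 v k l m)
        + of_int l * (d2 v k l m * d5 u k l m * d5 v k l m) /
            (d2 u k l m * d2 v k l m + d2 v k l m * d5 u k l m + d5 u k l m * d5 v k l m)
        + of_int m * (d4 v k l m * d1 u k l m * d1 v k l m) /
            (d4 u k l m * d4 v k l m + d4 v k l m * d1 u k l m + d1 u k l m * d1 v k l m)"
    and a0: "a 0 0 0 = 0" and a'0: "a' 0 0 0 = 0"
    and d_a: "\<forall>k l m. d0 a k l m = v k l m * d0 u k l m \<and>
              d2 a k l m = v k l m * d2 u k l m \<and>
              d4 a k l m = v k l m * d4 u k l m"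
    and d_a': "\<forall>k l m. d0 a' k l m = u (k+1) l m * d0 v k l m \<and>
              d2 a' k l m = u k (l+1) m * d2 v k l m \<and>
              d4 a' k l m = u k l (m+1) * d4 v k l m"
begin

lemma den_nonzero:
  "d0 u k l m * d0 v k l m + d0 v k l m * d3 u k l m + d3 u k l m * d3 v k l m \<noteq> 0"
  "d2 u k l m * d2 v k l m + d2 v k l m * d5 u k l m + d5 u k l m * d5 v k l m \<noteq> 0"
  "d4 u k l m * d4 v k l m + d4 v k l m * d1 u k l m + d1 u k l m * d1 v k l m \<noteq> 0"
  using nondeg_den by auto

abbreviation P0 :: "int \<Rightarrow> int \<Rightarrow> int \<Rightarrow> complex^3^3" where
  "P0 k l m \<equiv> Pmat (d0 u k l m) (d0 v k l m) (d3 u k l m) (d3 v k l m)"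

abbreviation P2 :: "int \<Rightarrow> int \<Rightarrow> int \<Rightarrow> complex^3^3" where
  "P2 k l m \<equiv> Pmat (d2 u k l m) (d2 v k l m) (d5 u k l m) (d5 v k l m)"

abbreviation P4 :: "int \<Rightarrow> int \<Rightarrow> int \<Rightarrow> complex^3^3" where
  "P4 k l m \<equiv> Pmat (d4 u k l m) (d4 v k l m) (d1 u k l m) (d1 v k l m)"

lemma Cmat_intertwine_0: "Cmat u v (k+1) l m ** L0 k l m (-1) = L0 k l m (-1) ** Cmat u v k l m"
proof -
  have "P0 (k+1) l m ** L0 k l m (-1) = 0" "L0 k l m (-1) ** P0 k l m = 0"
    by (simp_all add: d_backward_eq Pmat_mult_Lmat_minus1 Lmat_minus1_mult_Pmat)
  moreover have "P2 (k+1) l m ** L0 k l m (-1) = L0 k l m (-1) ** P2 k l m"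
    using den_nonzero(2)[of k l m] den_nonzero(2)[of "k+1" l m] unfolding d_backward_eq
    by (intro Pmat_intertwine[OF L0_L2_commute L0_L2_commute[of k "l-1", simplified, symmetric]])
      simp_all
  moreover have "P4 (k+1) l m ** L0 k l m (-1) = L0 k l m (-1) ** P4 k l m"
    using den_nonzero(3)[of k l m] den_nonzero(3)[of "k+1" l m] unfolding d_backward_eq
    by (intro Pmat_intertwine[OF L0_L4_commute L0_L4_commute[of k l "m-1", simplified, symmetric]])
      simp_all
  ultimately show ?thesis
    by (simp add: Cmat_def matrix_add_ldistrib matrix_add_rdistrib smat_mult_left smat_mult_right)
qed

lemma Cmat_intertwine_2: "Cmat u v k (l+1) m ** L2 k l m (-1) = L2 k l m (-1) ** Cmat u v k l m"
proof -
  have "P2 k (l+1) m ** L2 k l m (-1) = 0" "L2 k l m (-1) ** P2 k l m = 0"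
    by (simp_all add: d_backward_eq Pmat_mult_Lmat_minus1 Lmat_minus1_mult_Pmat)
  moreover have "P0 k (l+1) m ** L2 k l m (-1) = L2 k l m (-1) ** P0 k l m"
    using den_nonzero(1)[of k l m] den_nonzero(1)[of k "l+1" m] unfolding d_backward_eq
    by (intro Pmat_intertwine[OF L0_L2_commute[symmetric] L0_L2_commute[of "k-1", simplified]])
      simp_all
  moreover have "P4 k (l+1) m ** L2 k l m (-1) = L2 k l m (-1) ** P4 k l m"
    using den_nonzero(3)[of k l m] den_nonzero(3)[of k "l+1" m] unfolding d_backward_eq
    by (intro Pmat_intertwine[OF L2_L4_commute L2_L4_commute[of k l "m-1", simplified, symmetric]])
      simp_all
  ultimately show ?thesis
    by (simp add: Cmat_def matrix_add_ldistrib matrix_add_rdistrib smat_mult_left smat_mult_right)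
qed

lemma Cmat_intertwine_4: "Cmat u v k l (m+1) ** L4 k l m (-1) = L4 k l m (-1) ** Cmat u v k l m"
proof -
  have "P4 k l (m+1) ** L4 k l m (-1) = 0" "L4 k l m (-1) ** P4 k l m = 0"
    by (simp_all add: d_backward_eq Pmat_mult_Lmat_minus1 Lmat_minus1_mult_Pmat)
  moreover have "P0 k l (m+1) ** L4 k l m (-1) = L4 k l m (-1) ** P0 k l m"
    using den_nonzero(1)[of k l m] den_nonzero(1)[of k l "m+1"] unfolding d_backward_eq
    by (intro Pmat_intertwine[OF L0_L4_commute[symmetric] L0_L4_commute[of "k-1", simplified]])
      simp_all
  moreover have "P2 k l (m+1) ** L4 k l m (-1) = L4 k l m (-1) ** P2 k l m"
    using den_nonzero(2)[of k l m] den_nonzero(2)[of k l "m+1"] unfolding d_backward_eq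
    by (intro Pmat_intertwine[OF L2_L4_commute[symmetric] L2_L4_commute[of k "l-1", simplified]])
      simp_all
  ultimately show ?thesis
    by (simp add: Cmat_def matrix_add_ldistrib matrix_add_rdistrib smat_mult_left smat_mult_right)
qed

lemma trace_Cmat:
  "Cmat u v k l m $1$1 + Cmat u v k l m $2$2 + Cmat u v k l m $3$3 = of_int k + of_int l + of_int m"
proof -
  have "Cmat u v k l m $1$1 + Cmat u v k l m $2$2 + Cmat u v k l m $3$3 =
      of_int k * (P0 k l m $1$1 + P0 k l m $2$2 + P0 k l m $3$3)
    + of_int l * (P2 k l m $1$1 + P2 k l m $2$2 + P2 k l m $3$3)
    + of_int m * (P4 k l m $1$1 + P4 k l m $2$2 + P4 k l m $3$3)"
    by (simp add: Cmat_def algebra_simps)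
  then show ?thesis
    by (simp add: trace_Pmat den_nonzero)
qed

lemma Cmat_12: "\<alpha> * u k l m + Cmat u v k l m $1$2 = 0"
  using constr_u[rule_format, of k l m] by (simp add: Cmat_def Pmat_def)

lemma Cmat_23: "\<beta> * v k l m + Cmat u v k l m $2$3 = 0"
  using constr_v[rule_format, of k l m] by (simp add: Cmat_def Pmat_def)

lemma uv_step:
  "u (k+1) l m = u k l m + d0 u k l m" "u k (l+1) m = u k l m + d2 u k l m"
  "u k l (m+1) = u k l m + d4 u k l m" "v (k+1) l m = v k l m + d0 v k l m"
  "v k (l+1) m = v k l m + d2 v k l m" "v k l (m+1) = v k l m + d4 v k l m"
  by (simp_all add: d0_def d2_def d4_def)

definition D13 :: "int \<Rightarrow> int \<Rightarrow> int \<Rightarrow> complex" where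
  "D13 k l m = \<beta> * a k l m - \<alpha> * a' k l m"

lemma D13_step:
  "D13 (k+1) l m = D13 k l m + \<beta> * v k l m * d0 u k l m - \<alpha> * (u k l m + d0 u k l m) * d0 v k l m"
  "D13 k (l+1) m = D13 k l m + \<beta> * v k l m * d2 u k l m - \<alpha> * (u k l m + d2 u k l m) * d2 v k l m"
  "D13 k l (m+1) = D13 k l m + \<beta> * v k l m * d4 u k l m - \<alpha> * (u k l m + d4 u k l m) * d4 v k l m"
proof -
  have "D13 (k+1) l m = D13 k l m + \<beta> * d0 a k l m - \<alpha> * d0 a' k l m"
    "D13 k (l+1) m = D13 k l m + \<beta> * d2 a k l m - \<alpha> * d2 a' k l m"
    "D13 k l (m+1) = D13 k l m + \<beta> * d4 a k l m - \<alpha> * d4 a' k l m"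
    by (simp_all add: D13_def d0_def d2_def d4_def algebra_simps)
  then show "D13 (k+1) l m = D13 k l m + \<beta> * v k l m * d0 u k l m - \<alpha> * (u k l m + d0 u k l m) * d0 v k l m"
    "D13 k (l+1) m = D13 k l m + \<beta> * v k l m * d2 u k l m - \<alpha> * (u k l m + d2 u k l m) * d2 v k l m"
    "D13 k l (m+1) = D13 k l m + \<beta> * v k l m * d4 u k l m - \<alpha> * (u k l m + d4 u k l m) * d4 v k l m"
    using d_a d_a' by (simp_all add: uv_step[symmetric])
qed

lemma trace_Cmat_step:
  "Cmat u v (k+1) l m $1$1 + Cmat u v (k+1) l m $2$2 + Cmat u v (k+1) l m $3$3
     = Cmat u v k l m $1$1 + Cmat u v k l m $2$2 + Cmat u v k l m $3$3 + 1"
  "Cmat u v k (l+1) m $1$1 + Cmat u v k (l+1) m $2$2 + Cmat u v k (l+1) m $3$3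
     = Cmat u v k l m $1$1 + Cmat u v k l m $2$2 + Cmat u v k l m $3$3 + 1"
  "Cmat u v k l (m+1) $1$1 + Cmat u v k l (m+1) $2$2 + Cmat u v k l (m+1) $3$3
     = Cmat u v k l m $1$1 + Cmat u v k l m $2$2 + Cmat u v k l m $3$3 + 1"
  by (simp_all only: trace_Cmat) simp_all

lemma residue_sum_13: "Cmat u v k l m $1$3 + D13 k l m = 0"
proof (rule lattice_propagate[where P = "\<lambda>k l m. Cmat u v k l m $1$3 + D13 k l m = 0"])
  show "Cmat u v 0 0 0 $1$3 + D13 0 0 0 = 0"
    by (simp add: Cmat_def D13_def a0 a'0)
  show "Cmat u v k l m $1$3 + D13 k l m = 0 \<longleftrightarrow> Cmat u v (k+1) l m $1$3 + D13 (k+1) l m = 0"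
    for k l m
  proof -
    have "Cmat u v (k+1) l m $1$3 + D13 (k+1) l m = Cmat u v k l m $1$3 + D13 k l m"
      unfolding D13_step by (rule residue_sum_13_step[OF Cmat_intertwine_0])
        (use Cmat_12[of "k+1" l m] Cmat_23[of k l m] in \<open>simp_all add: uv_step\<close>)
    then show ?thesis
      by simp
  qed
  show "Cmat u v k l m $1$3 + D13 k l m = 0 \<longleftrightarrow> Cmat u v k (l+1) m $1$3 + D13 k (l+1) m = 0"
    for k l m
  proof -
    have "Cmat u v k (l+1) m $1$3 + D13 k (l+1) m = Cmat u v k l m $1$3 + D13 k l m"
      unfolding D13_step by (rule residue_sum_13_step[OF Cmat_intertwine_2])
        (use Cmat_12[of k "l+1" m] Cmat_23[of k l m] in \<open>simp_all add: uv_step\<close>)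
    then show ?thesis
      by simp
  qed
  show "Cmat u v k l m $1$3 + D13 k l m = 0 \<longleftrightarrow> Cmat u v k l (m+1) $1$3 + D13 k l (m+1) = 0"
    for k l m
  proof -
    have "Cmat u v k l (m+1) $1$3 + D13 k l (m+1) = Cmat u v k l m $1$3 + D13 k l m"
      unfolding D13_step by (rule residue_sum_13_step[OF Cmat_intertwine_4])
        (use Cmat_12[of k l "m+1"] Cmat_23[of k l m] in \<open>simp_all add: uv_step\<close>)
    then show ?thesis
      by simp
  qed
qed

lemma Amat_eq: "Amat \<alpha> \<beta> u v a a' k l m \<mu> =
    smat (1/(1+\<mu>)) (Cmat u v k l m) + smat (1/\<mu>) (Dres \<alpha> \<beta> (u k l m) (v k l m) (D13 k l m))"
  by (simp add: Amat_def Dmat_def Dres_def D13_def)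

lemma Amat_compatibility_0:
  assumes "\<mu> \<noteq> 0" "\<mu> \<noteq> -1"
  shows "Amat \<alpha> \<beta> u v a a' (k+1) l m \<mu> ** L0 k l m \<mu> - L0 k l m \<mu> ** Amat \<alpha> \<beta> u v a a' k l m \<mu>
    = Lmat_deriv (d0 u k l m) (d0 v k l m)"
  unfolding Amat_eq D13_step uv_step(1,4)
proof (rule edge_compatibility[OF Cmat_intertwine_0 trace_Cmat_step(1) Cmat_12 _ Cmat_23 _ residue_sum_13
      _ _ _ assms])
  show "\<alpha> * (u k l m + d0 u k l m) + Cmat u v (k + 1) l m $ 1 $ 2 = 0"
    using Cmat_12[of "k+1" l m] by (simp add: uv_step)
  show "\<beta> * (v k l m + d0 v k l m) + Cmat u v (k + 1) l m $ 2 $ 3 = 0"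
    using Cmat_23[of "k+1" l m] by (simp add: uv_step)
  show "Cmat u v (k + 1) l m $ 1 $ 3 + (D13 k l m + \<beta> * v k l m * d0 u k l m
      - \<alpha> * (u k l m + d0 u k l m) * d0 v k l m) = 0"
    using residue_sum_13[of "k+1" l m] by (simp add: D13_step)
qed simp_all

lemma Amat_compatibility_2:
  assumes "\<mu> \<noteq> 0" "\<mu> \<noteq> -1"
  shows "Amat \<alpha> \<beta> u v a a' k (l+1) m \<mu> ** L2 k l m \<mu> - L2 k l m \<mu> ** Amat \<alpha> \<beta> u v a a' k l m \<mu>
    = Lmat_deriv (d2 u k l m) (d2 v k l m)"
  unfolding Amat_eq D13_step uv_step(2,5)
proof (rule edge_compatibility[OF Cmat_intertwine_2 trace_Cmat_step(2) Cmat_12 _ Cmat_23 _ residue_sum_13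
      _ _ _ assms])
  show "\<alpha> * (u k l m + d2 u k l m) + Cmat u v k (l + 1) m $ 1 $ 2 = 0"
    using Cmat_12[of k "l+1" m] by (simp add: uv_step)
  show "\<beta> * (v k l m + d2 v k l m) + Cmat u v k (l + 1) m $ 2 $ 3 = 0"
    using Cmat_23[of k "l+1" m] by (simp add: uv_step)
  show "Cmat u v k (l + 1) m $ 1 $ 3 + (D13 k l m + \<beta> * v k l m * d2 u k l m
      - \<alpha> * (u k l m + d2 u k l m) * d2 v k l m) = 0"
    using residue_sum_13[of k "l+1" m] by (simp add: D13_step)
qed simp_all

lemma Amat_compatibility_4:
  assumes "\<mu> \<noteq> 0" "\<mu> \<noteq> -1"
  shows "Amat \<alpha> \<beta> u v a a' k l (m+1) \<mu> ** L4 k l m \<mu> - L4 k l m \<mu> ** Amat \<alpha> \<beta> u v a a' k l m \<mu>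
    = Lmat_deriv (d4 u k l m) (d4 v k l m)"
  unfolding Amat_eq D13_step uv_step(3,6)
proof (rule edge_compatibility[OF Cmat_intertwine_4 trace_Cmat_step(3) Cmat_12 _ Cmat_23 _ residue_sum_13
      _ _ _ assms])
  show "\<alpha> * (u k l m + d4 u k l m) + Cmat u v k l (m + 1) $ 1 $ 2 = 0"
    using Cmat_12[of k l "m+1"] by (simp add: uv_step)
  show "\<beta> * (v k l m + d4 v k l m) + Cmat u v k l (m + 1) $ 2 $ 3 = 0"
    using Cmat_23[of k l "m+1"] by (simp add: uv_step)
  show "Cmat u v k l (m + 1) $ 1 $ 3 + (D13 k l m + \<beta> * v k l m * d4 u k l m
      - \<alpha> * (u k l m + d4 u k l m) * d4 v k l m) = 0"
    using residue_sum_13[of k l "m+1"] by (simp add: D13_step)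
qed simp_all

definition wave_init :: "complex \<Rightarrow> complex^3^3" where
  "wave_init = diag_powr (- (2*\<alpha> + \<beta>) / 3) ((\<alpha> - \<beta>) / 3) ((2*\<beta> + \<alpha>) / 3)"

lemma Amat_origin: "Amat \<alpha> \<beta> u v a a' 0 0 0 \<mu> =
    smat (1/\<mu>) (mat3 (- (2*\<alpha> + \<beta>) / 3) 0 0 0 ((\<alpha> - \<beta>) / 3) 0 0 0 ((2*\<beta> + \<alpha>) / 3))"
  by (simp add: Amat_def Cmat_def Dmat_def u0 v0 a0 a'0)

lemma wave_ode:
  assumes \<mu>: "\<mu> \<in> ball 2 1"
  shows "has_mat_deriv (wave wave_init k l m) (Amat \<alpha> \<beta> u v a a' k l m \<mu> ** wave wave_init k l m \<mu>) \<mu>"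
proof (rule lattice_propagate[where P = "\<lambda>k l m.
    has_mat_deriv (wave wave_init k l m) (Amat \<alpha> \<beta> u v a a' k l m \<mu> ** wave wave_init k l m \<mu>) \<mu>"])
  have S: "open (ball (2::complex) 1)" "-1 \<notin> ball (2::complex) 1"
    "\<And>x. x \<in> ball (2::complex) 1 \<Longrightarrow> x \<noteq> -1"
    by (auto simp: dist_norm)
  have ne: "\<mu> \<noteq> 0" "\<mu> \<noteq> -1"
    using \<mu> ball_2_1_ne by blast+
  show "has_mat_deriv (wave wave_init 0 0 0) (Amat \<alpha> \<beta> u v a a' 0 0 0 \<mu> ** wave wave_init 0 0 0 \<mu>) \<mu>"
    unfolding wave_origin Amat_origin wave_init_def
    by (rule has_mat_deriv_diag_powr[OF ball_2_1_not_nonpos[OF \<mu>]])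
  show "has_mat_deriv (wave wave_init k l m) (Amat \<alpha> \<beta> u v a a' k l m \<mu> ** wave wave_init k l m \<mu>) \<mu>
    \<longleftrightarrow> has_mat_deriv (wave wave_init (k+1) l m)
          (Amat \<alpha> \<beta> u v a a' (k+1) l m \<mu> ** wave wave_init (k+1) l m \<mu>) \<mu>" for k l m
    by (rule has_mat_deriv_Lmat_gauge_iff[OF S(1) \<mu> S(2) wave_step_0[OF S(3)] wave_back(1)[OF S(3)]
          d_nonzero(1) d_nonzero(4) Amat_compatibility_0[OF ne]])
  show "has_mat_deriv (wave wave_init k l m) (Amat \<alpha> \<beta> u v a a' k l m \<mu> ** wave wave_init k l m \<mu>) \<mu>
    \<longleftrightarrow> has_mat_deriv (wave wave_init k (l+1) m)
          (Amat \<alpha> \<beta> u v a a' k (l+1) m \<mu> ** wave wave_init k (l+1) m \<mu>) \<mu>" for k l m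
    by (rule has_mat_deriv_Lmat_gauge_iff[OF S(1) \<mu> S(2) wave_step_2[OF S(3)] wave_back(2)[OF S(3)]
          d_nonzero(2) d_nonzero(5) Amat_compatibility_2[OF ne]])
  show "has_mat_deriv (wave wave_init k l m) (Amat \<alpha> \<beta> u v a a' k l m \<mu> ** wave wave_init k l m \<mu>) \<mu>
    \<longleftrightarrow> has_mat_deriv (wave wave_init k l (m+1))
          (Amat \<alpha> \<beta> u v a a' k l (m+1) \<mu> ** wave wave_init k l (m+1) \<mu>) \<mu>" for k l m
    by (rule has_mat_deriv_Lmat_gauge_iff[OF S(1) \<mu> S(2) wave_step_4[OF S(3)] wave_back(3)[OF S(3)]
          d_nonzero(3) d_nonzero(6) Amat_compatibility_4[OF ne]])
qed

lemma isomonodromic_wave: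
  assumes "\<mu> \<in> ball 2 1"
  shows "det (wave wave_init k l m \<mu>) \<noteq> 0 \<and>
    (\<forall>n::int. wave wave_init (k+n) (l+n) (m+n) \<mu> = smat ((1 + \<mu>) powi n) (wave wave_init k l m \<mu>)) \<and>
    wave wave_init (k+1) l m \<mu> = Lmat (d0 u k l m) (d0 v k l m) \<mu> ** wave wave_init k l m \<mu> \<and>
    wave wave_init k (l+1) m \<mu> = Lmat (d2 u k l m) (d2 v k l m) \<mu> ** wave wave_init k l m \<mu> \<and>
    wave wave_init k l (m+1) \<mu> = Lmat (d4 u k l m) (d4 v k l m) \<mu> ** wave wave_init k l m \<mu> \<and>
    (\<forall>i j. ((\<lambda>x. wave wave_init k l m x $ i $ j) has_field_derivative
             (Amat \<alpha> \<beta> u v a a' k l m \<mu> ** wave wave_init k l m \<mu>) $ i $ j) (at \<mu>))"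
proof -
  have "\<mu> \<noteq> 0" "\<mu> \<noteq> -1"
    using ball_2_1_ne[OF assms] by simp_all
  moreover from \<open>\<mu> \<noteq> 0\<close> have "det (wave_init \<mu>) \<noteq> 0"
    unfolding wave_init_def by (rule diag_powr_det)
  ultimately show ?thesis
    using wave_ode[OF assms, of k l m]
    by (simp add: det_wave wave_shift wave_step_0 wave_step_2 wave_step_4 has_mat_deriv_def)
qed

end

theorem theorem19:
  fixes u v :: vfun and \<alpha> \<beta> :: complex
  assumes u_vert: "vertex_fun u" and v_vert: "vertex_fun v"
    and u0: "u 0 0 0 = 0" and v0: "v 0 0 0 = 0"
    and nondeg_f: "\<forall>k l m. d0 u k l m \<noteq> 0 \<and> d2 u k l m \<noteq> 0 \<and> d4 u k l m \<noteq> 0"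
    and nondeg_g: "\<forall>k l m. d0 v k l m \<noteq> 0 \<and> d2 v k l m \<noteq> 0 \<and> d4 v k l m \<noteq> 0"
    and nondeg_den: "\<forall>k l m.
          d0 u k l m * d0 v k l m + d0 v k l m * d3 u k l m + d3 u k l m * d3 v k l m \<noteq> 0 \<and>
          d2 u k l m * d2 v k l m + d2 v k l m * d5 u k l m + d5 u k l m * d5 v k l m \<noteq> 0 \<and>
          d4 u k l m * d4 v k l m + d4 v k l m * d1 u k l m + d1 u k l m * d1 v k l m \<noteq> 0"
    and tri: "triangle_eqs u v"
    and constr_u: "\<forall>k l m. \<alpha> * u k l m =
          of_int k * (d0 u k l m * d0 v k l m * d3 u k l m) /
            (d0 u k l m * d0 v k l m + d0 v k l m * d3 u k l m + d3 u k l m * d3 v k l m)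
        + of_int l * (d2 u k l m * d2 v k l m * d5 u k l m) /
            (d2 u k l m * d2 v k l m + d2 v k l m * d5 u k l m + d5 u k l m * d5 v k l m)
        + of_int m * (d4 u k l m * d4 v k l m * d1 u k l m) /
            (d4 u k l m * d4 v k l m + d4 v k l m * d1 u k l m + d1 u k l m * d1 v k l m)"
    and constr_v: "\<forall>k l m. \<beta> * v k l m =
          of_int k * (d0 v k l m * d3 u k l m * d3 v k l m) /
            (d0 u k l m * d0 v k l m + d0 v k l m * d3 u k l m + d3 u k l m * d3 v k l m)
        + of_int l * (d2 v k l m * d5 u k l m * d5 v k l m) /
            (d2 u k l m * d2 v k l m + d2 v k l m * d5 u k l m + d5 u k l m * d5 v k l m)
        + of_int m * (d4 v k l m * d1 u k l m * d1 v k l m) /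
            (d4 u k l m * d4 v k l m + d4 v k l m * d1 u k l m + d1 u k l m * d1 v k l m)"
  shows "\<exists>(a :: vfun) (a' :: vfun) (U :: complex set)
           (\<Psi> :: int \<Rightarrow> int \<Rightarrow> int \<Rightarrow> complex \<Rightarrow> complex^3^3).
     vertex_fun a \<and> vertex_fun a' \<and>
     (\<forall>k l m. d0 a k l m = v k l m * d0 u k l m \<and>
              d2 a k l m = v k l m * d2 u k l m \<and>
              d4 a k l m = v k l m * d4 u k l m) \<and>
     (\<forall>k l m. d0 a' k l m = u (k+1) l m * d0 v k l m \<and>
              d2 a' k l m = u k (l+1) m * d2 v k l m \<and>
              d4 a' k l m = u k l (m+1) * d4 v k l m) \<and>
     open U \<and> connected U \<and> U \<noteq> {} \<and> 0 \<notin> U \<and> -1 \<notin> U \<and>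
     (\<forall>\<mu>\<in>U. \<forall>k l m.
        det (\<Psi> k l m \<mu>) \<noteq> 0 \<and>
        (\<forall>n::int. \<Psi> (k+n) (l+n) (m+n) \<mu> = smat ((1 + \<mu>) powi n) (\<Psi> k l m \<mu>)) \<and>
        \<Psi> (k+1) l m \<mu> = Lmat (d0 u k l m) (d0 v k l m) \<mu> ** \<Psi> k l m \<mu> \<and>
        \<Psi> k (l+1) m \<mu> = Lmat (d2 u k l m) (d2 v k l m) \<mu> ** \<Psi> k l m \<mu> \<and>
        \<Psi> k l (m+1) \<mu> = Lmat (d4 u k l m) (d4 v k l m) \<mu> ** \<Psi> k l m \<mu> \<and>
        (\<forall>i j. ((\<lambda>x. \<Psi> k l m x $ i $ j) has_field_derivative
                 (Amat \<alpha> \<beta> u v a a' k l m \<mu> ** \<Psi> k l m \<mu>) $ i $ j) (at \<mu>)))"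
proof -
  interpret cross_ratio_lattice u v
    using u_vert v_vert nondeg_f nondeg_g tri by unfold_locales
  obtain a where a: "vertex_fun a" "a 0 0 0 = 0" "\<And>k l m. d0 a k l m = v k l m * d0 u k l m"
    "\<And>k l m. d2 a k l m = v k l m * d2 u k l m" "\<And>k l m. d4 a k l m = v k l m * d4 u k l m"
    using potential_exists by blast
  define a' where "a' = (\<lambda>k l m. u k l m * v k l m - a k l m)"
  have a': "vertex_fun a'" "a' 0 0 0 = 0"
    "\<And>k l m. d0 a' k l m = u (k+1) l m * d0 v k l m" "\<And>k l m. d2 a' k l m = u k (l+1) m * d2 v k l m"
    "\<And>k l m. d4 a' k l m = u k l (m+1) * d4 v k l m"
    using a u0 v0 dual_potential[OF a(3-5)] by (simp_all add: a'_def vertex_fun_def)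
  \<comment> \<open>any disc avoiding \<open>\<real>\<^sub>\<le>\<^sub>0\<close> will do: there the powers \<open>\<mu> powr d\<close> of the initial value are holomorphic\<close>
  have domain: "open (ball (2::complex) 1)" "connected (ball (2::complex) 1)" "ball (2::complex) 1 \<noteq> {}"
    "0 \<notin> ball (2::complex) 1" "-1 \<notin> ball (2::complex) 1"
    by (simp_all add: dist_norm)
  interpret isomonodromic_lattice u v \<alpha> \<beta> a a'
    using u0 v0 nondeg_den constr_u constr_v a a' by unfold_locales simp_all
  show ?thesis
    by (rule exI[of _ a], rule exI[of _ a'], rule exI[of _ "ball 2 1"], rule exI[of _ "wave wave_init"])
      (use a a' domain isomonodromic_wave in auto)
qed

end
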